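(* Let $R$ be a ring, let $X$ be an $R^\circ$-complex (complex of right $R$-modules) and let $Y$ be a bounded above $R$-complex with $\sup Y=k\in\mathbb{Z}$. Then there are isomorphisms of $\mathbb{Z}$-complexes $$X\,\bar{\otimes}_R\,Y\;\cong\;{\lim}_{i\in\mathbb{N}}\big((X\otimes_RY)/(X\otimes_RY_{\le k-i})\big)$$ and $$X\,\check{\otimes}_R\,Y\;\cong\;{\lim}^1_{i\in\mathbb{N}}\big(X\otimes_RY_{\le k-i}\big),$$ where the inverse systems have as transition maps the canonical surjections, respectively the inclusions, induced by the filtration $Y=Y_{\le k}\supseteq Y_{\le k-1}\supseteq Y_{\le k-2}\supseteq\cdots$.
   Context: For an $R$-complex $Y$, $\sup Y=\sup\{i\in\mathbb{Z}: Y_i\neq0\}$, and $Y_{\le m}$ denotes the subcomplex of $Y$ with $(Y_{\le m})_i=Y_i$ for $i\le m$ and $0$ for $i>m$ (with the restricted differential). For an $R^\circ$-complex $X$ and an $R$-complex $Y$: the tensor product $X\otimes_RY$ has degree-$n$ term $\coprod_{i\in\mathbb{Z}}X_i\otimes_RY_{n-i}$ and differential $\partial(x\otimes y)=\partial^X(x)\otimes y+(-1)^{|x|}x\otimes\partial^Y(y)$; the unbounded tensor product $X\bar\otimes_RY$ has degree-$n$ term $\prod_{i\in\mathbb{Z}}X_i\otimes_RY_{n-i}$ with the same differential formula; $X\otimes_RY$ is a subcomplex of $X\bar\otimes_RY$, and the stable tensor product is the quotient complex $X\check\otimes_RY=(X\bar\otimes_RY)/(X\otimes_RY)$. For an $\mathbb{N}$-inverse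 system $\{\nu^{uv}:X^v\to X^u\}_{u\le v}$ of complexes, $\lim_iX^i$ and $\lim^1_iX^i$ are the kernel and cokernel of $1-\nu:\prod_iX^i\to\prod_iX^i$, $(x_i)_i\mapsto(x_i-\nu^{i,i+1}(x_{i+1}))_i$. *)

theory Defs
  imports "HOL-Algebra.Free_Abelian_Groups" "HOL-Algebra.Module"
begin

text \<open>The opposite ring; right R-modules are left modules over it.\<close>
definition opp_ring :: "'r ring \<Rightarrow> 'r ring" where
  "opp_ring R = R\<lparr>mult := (\<lambda>a b. b \<otimes>\<^bsub>R\<^esub> a)\<rparr>"

text \<open>Left modules over an arbitrary ring (HOL-Algebra's module locale needs a commutative ring).\<close>
definition lmodule :: "'r ring \<Rightarrow> ('r, 'a) module \<Rightarrow> bool" where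
  "lmodule R M \<longleftrightarrow> ring R \<and> abelian_group M \<and>
     (\<forall>a \<in> carrier R. \<forall>x \<in> carrier M. a \<odot>\<^bsub>M\<^esub> x \<in> carrier M) \<and>
     (\<forall>a \<in> carrier R. \<forall>b \<in> carrier R. \<forall>x \<in> carrier M.
        (a \<oplus>\<^bsub>R\<^esub> b) \<odot>\<^bsub>M\<^esub> x = a \<odot>\<^bsub>M\<^esub> x \<oplus>\<^bsub>M\<^esub> b \<odot>\<^bsub>M\<^esub> x) \<and>
     (\<forall>a \<in> carrier R. \<forall>x \<in> carrier M. \<forall>y \<in> carrier M.
        a \<odot>\<^bsub>M\<^esub> (x \<oplus>\<^bsub>M\<^esub> y) = a \<odot>\<^bsub>M\<^esub> x \<oplus>\<^bsub>M\<^esub> a \<odot>\<^bsub>M\<^esub> y) \<and>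
     (\<forall>a \<in> carrier R. \<forall>b \<in> carrier R. \<forall>x \<in> carrier M.
        (a \<otimes>\<^bsub>R\<^esub> b) \<odot>\<^bsub>M\<^esub> x = a \<odot>\<^bsub>M\<^esub> (b \<odot>\<^bsub>M\<^esub> x)) \<and>
     (\<forall>x \<in> carrier M. \<one>\<^bsub>R\<^esub> \<odot>\<^bsub>M\<^esub> x = x)"

definition lmod_hom :: "'r ring \<Rightarrow> ('r, 'a) module \<Rightarrow> ('r, 'a) module \<Rightarrow> ('a \<Rightarrow> 'a) set" where
  "lmod_hom R M N = {f. (\<forall>x \<in> carrier M. f x \<in> carrier N) \<and>
     (\<forall>x \<in> carrier M. \<forall>y \<in> carrier M. f (x \<oplus>\<^bsub>M\<^esub> y) = f x \<oplus>\<^bsub>N\<^esub> f y) \<and>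
     (\<forall>a \<in> carrier R. \<forall>x \<in> carrier M. f (a \<odot>\<^bsub>M\<^esub> x) = a \<odot>\<^bsub>N\<^esub> f x)}"

definition is_complex :: "'r ring \<Rightarrow> (int \<Rightarrow> ('r, 'a) module) \<Rightarrow> (int \<Rightarrow> 'a \<Rightarrow> 'a) \<Rightarrow> bool" where
  "is_complex R M d \<longleftrightarrow> (\<forall>n. lmodule R (M n)) \<and> (\<forall>n. d n \<in> lmod_hom R (M n) (M (n - 1))) \<and>
     (\<forall>n. \<forall>x \<in> carrier (M n). d (n - 1) (d n x) = \<zero>\<^bsub>M (n - 2)\<^esub>)"

definition nonzero_degrees :: "(int \<Rightarrow> ('r, 'a) module) \<Rightarrow> int set" where
  "nonzero_degrees M = {i. carrier (M i) \<noteq> {\<zero>\<^bsub>M i\<^esub>}}"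

definition bdd_above_with_sup :: "(int \<Rightarrow> ('r, 'a) module) \<Rightarrow> int \<Rightarrow> bool" where
  "bdd_above_with_sup M k \<longleftrightarrow> nonzero_degrees M \<noteq> {} \<and> bdd_above (nonzero_degrees M)
      \<and> Sup (nonzero_degrees M) = k"

text \<open>The truncation \<open>Y_{\<le>m}\<close> (same differential, restricted).\<close>
definition trunc :: "(int \<Rightarrow> ('r, 'a) module) \<Rightarrow> int \<Rightarrow> int \<Rightarrow> ('r, 'a) module" where
  "trunc M m i = (if i \<le> m then M i else (M i)\<lparr>carrier := {\<zero>\<^bsub>M i\<^esub>}\<rparr>)"

text \<open>\<open>A\<close> is a left module over the opposite ring, i.e. a right R-module with \<open>a\<cdot>r = r \<odot>\<^bsub>A\<^esub> a\<close>.
  \<open>A \<otimes>\<^sub>R B\<close> is the free abelian group on \<open>A \<times> B\<close> modulo the bilinearity/balancing relations.\<close>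
definition tensor_rels :: "'r ring \<Rightarrow> ('r, 'a) module \<Rightarrow> ('r, 'b) module \<Rightarrow> ('a \<times> 'b \<Rightarrow>\<^sub>0 int) set" where
  "tensor_rels R A B =
     {frag_of (a \<oplus>\<^bsub>A\<^esub> a', b) - frag_of (a, b) - frag_of (a', b) | a a' b.
        a \<in> carrier A \<and> a' \<in> carrier A \<and> b \<in> carrier B}
   \<union> {frag_of (a, b \<oplus>\<^bsub>B\<^esub> b') - frag_of (a, b) - frag_of (a, b') | a b b'.
        a \<in> carrier A \<and> b \<in> carrier B \<and> b' \<in> carrier B}
   \<union> {frag_of (r \<odot>\<^bsub>A\<^esub> a, b) - frag_of (a, r \<odot>\<^bsub>B\<^esub> b) | r a b.
        r \<in> carrier R \<and> a \<in> carrier A \<and> b \<in> carrier B}"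

definition tensor_subgroup :: "'r ring \<Rightarrow> ('r, 'a) module \<Rightarrow> ('r, 'b) module \<Rightarrow> ('a \<times> 'b \<Rightarrow>\<^sub>0 int) set" where
  "tensor_subgroup R A B = generate (free_Abelian_group (carrier A \<times> carrier B)) (tensor_rels R A B)"

definition tensor_mod :: "'r ring \<Rightarrow> ('r, 'a) module \<Rightarrow> ('r, 'b) module \<Rightarrow> ('a \<times> 'b \<Rightarrow>\<^sub>0 int) set monoid" where
  "tensor_mod R A B = free_Abelian_group (carrier A \<times> carrier B) Mod tensor_subgroup R A B"

definition tensor_map :: "'r ring \<Rightarrow> ('r, 'a) module \<Rightarrow> ('r, 'b) module \<Rightarrow> ('a \<Rightarrow> 'a) \<Rightarrow> ('b \<Rightarrow> 'b)
     \<Rightarrow> ('a \<times> 'b \<Rightarrow>\<^sub>0 int) set \<Rightarrow> ('a \<times> 'b \<Rightarrow>\<^sub>0 int) set" where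
  "tensor_map R A' B' f g C =
     tensor_subgroup R A' B' #>\<^bsub>free_Abelian_group (carrier A' \<times> carrier B')\<^esub>
       frag_extend (\<lambda>(a, b). frag_of (f a, g b)) (SOME c. c \<in> C)"

type_synonym ('a, 'b) tens = "('a \<times> 'b \<Rightarrow>\<^sub>0 int) set"

definition tcomp :: "'r ring \<Rightarrow> (int \<Rightarrow> ('r, 'a) module) \<Rightarrow> (int \<Rightarrow> ('r, 'b) module) \<Rightarrow> int \<Rightarrow> int
     \<Rightarrow> ('a, 'b) tens monoid" where
  "tcomp R X Y n i = tensor_mod R (X i) (Y (n - i))"

text \<open>Degree-\<open>n\<close> term of the unbounded tensor product: \<open>\<Prod>\<^sub>i X_i \<otimes> Y_{n-i}\<close>.\<close>
definition tprod :: "'r ring \<Rightarrow> (int \<Rightarrow> ('r, 'a) module) \<Rightarrow> (int \<Rightarrow> ('r, 'b) module) \<Rightarrow> int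
     \<Rightarrow> (int \<Rightarrow> ('a, 'b) tens) monoid" where
  "tprod R X Y n = \<lparr>carrier = {f. \<forall>i. f i \<in> carrier (tcomp R X Y n i)},
     mult = (\<lambda>f g i. f i \<otimes>\<^bsub>tcomp R X Y n i\<^esub> g i), one = (\<lambda>i. \<one>\<^bsub>tcomp R X Y n i\<^esub>)\<rparr>"

text \<open>Degree-\<open>n\<close> term of the tensor product: \<open>\<Coprod>\<^sub>i X_i \<otimes> Y_{n-i}\<close> (finitely supported families).\<close>
definition tsum_carrier :: "'r ring \<Rightarrow> (int \<Rightarrow> ('r, 'a) module) \<Rightarrow> (int \<Rightarrow> ('r, 'b) module) \<Rightarrow> int
     \<Rightarrow> (int \<Rightarrow> ('a, 'b) tens) set" where
  "tsum_carrier R X Y n = {f \<in> carrier (tprod R X Y n). finite {i. f i \<noteq> \<one>\<^bsub>tcomp R X Y n i\<^esub>}}"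

definition tsum :: "'r ring \<Rightarrow> (int \<Rightarrow> ('r, 'a) module) \<Rightarrow> (int \<Rightarrow> ('r, 'b) module) \<Rightarrow> int
     \<Rightarrow> (int \<Rightarrow> ('a, 'b) tens) monoid" where
  "tsum R X Y n = (tprod R X Y n)\<lparr>carrier := tsum_carrier R X Y n\<rparr>"

text \<open>\<open>\<partial>(x \<otimes> y) = \<partial>x \<otimes> y + (-1)^{|x|} x \<otimes> \<partial>y\<close>, componentwise.\<close>
definition tdiff :: "'r ring \<Rightarrow> (int \<Rightarrow> ('r, 'a) module) \<Rightarrow> (int \<Rightarrow> 'a \<Rightarrow> 'a)
     \<Rightarrow> (int \<Rightarrow> ('r, 'b) module) \<Rightarrow> (int \<Rightarrow> 'b \<Rightarrow> 'b) \<Rightarrow> int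
     \<Rightarrow> (int \<Rightarrow> ('a, 'b) tens) \<Rightarrow> (int \<Rightarrow> ('a, 'b) tens)" where
  "tdiff R X dX Y dY n f = (\<lambda>i.
     (let G = tcomp R X Y (n - 1) i;
          u = tensor_map R (X i) (Y (n - 1 - i)) (dX (i + 1)) (\<lambda>y. y) (f (i + 1));
          v = tensor_map R (X i) (Y (n - 1 - i)) (\<lambda>x. x) (dY (n - i)) (f i)
      in u \<otimes>\<^bsub>G\<^esub> (if even i then v else inv\<^bsub>G\<^esub> v)))"

text \<open>The chain map \<open>X \<otimes> Y_{\<le>m} \<rightarrow> X \<otimes> Y\<close> (resp. \<open>X \<otimes> Y_{\<le>m} \<rightarrow> X \<otimes> Y_{\<le>m'}\<close>, \<open>m \<le> m'\<close>)
  induced by the inclusion of the truncation.\<close>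
definition tincl :: "'r ring \<Rightarrow> (int \<Rightarrow> ('r, 'a) module) \<Rightarrow> (int \<Rightarrow> ('r, 'b) module) \<Rightarrow> int
     \<Rightarrow> (int \<Rightarrow> ('a, 'b) tens) \<Rightarrow> (int \<Rightarrow> ('a, 'b) tens)" where
  "tincl R X Y' n f = (\<lambda>i. tensor_map R (X i) (Y' (n - i)) (\<lambda>x. x) (\<lambda>y. y) (f i))"

text \<open>\<open>X \<otimes> Y_{\<le>m}\<close> regarded as a subcomplex of \<open>X \<otimes> Y\<close>: the image of the canonical map.\<close>
definition tsub :: "'r ring \<Rightarrow> (int \<Rightarrow> ('r, 'a) module) \<Rightarrow> (int \<Rightarrow> ('r, 'b) module) \<Rightarrow> int \<Rightarrow> int
     \<Rightarrow> (int \<Rightarrow> ('a, 'b) tens) set" where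
  "tsub R X Y m n = tincl R X Y n ` tsum_carrier R X (trunc Y m) n"

definition quot_grp :: "(int \<Rightarrow> ('e, 'x) monoid_scheme) \<Rightarrow> (int \<Rightarrow> 'e set) \<Rightarrow> int \<Rightarrow> 'e set monoid" where
  "quot_grp G H n = G n Mod H n"

definition quot_diff :: "(int \<Rightarrow> ('e, 'x) monoid_scheme) \<Rightarrow> (int \<Rightarrow> 'e \<Rightarrow> 'e) \<Rightarrow> (int \<Rightarrow> 'e set)
     \<Rightarrow> int \<Rightarrow> 'e set \<Rightarrow> 'e set" where
  "quot_diff G d H n S = H (n - 1) #>\<^bsub>G (n - 1)\<^esub> d n (SOME x. x \<in> S)"

definition cx_iso :: "(int \<Rightarrow> ('e, 'x) monoid_scheme) \<Rightarrow> (int \<Rightarrow> 'e \<Rightarrow> 'e)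
     \<Rightarrow> (int \<Rightarrow> ('f, 'y) monoid_scheme) \<Rightarrow> (int \<Rightarrow> 'f \<Rightarrow> 'f) \<Rightarrow> bool" where
  "cx_iso G d G' d' \<longleftrightarrow> (\<exists>\<phi>. \<forall>n. \<phi> n \<in> iso (G n) (G' n) \<and>
     (\<forall>x \<in> carrier (G n). \<phi> (n - 1) (d n x) = d' n (\<phi> n x)))"

text \<open>System: complexes \<open>(C u, dC u)\<close> for \<open>u \<in> \<nat>\<close>, with \<open>\<nu> u n = \<nu>^{u,u+1} : C (u+1) n \<rightarrow> C u n\<close>.\<close>
definition sys_prod :: "(nat \<Rightarrow> int \<Rightarrow> ('e, 'x) monoid_scheme) \<Rightarrow> int \<Rightarrow> (nat \<Rightarrow> 'e) monoid" where
  "sys_prod C n = \<lparr>carrier = {x. \<forall>u. x u \<in> carrier (C u n)},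
     mult = (\<lambda>x y u. x u \<otimes>\<^bsub>C u n\<^esub> y u), one = (\<lambda>u. \<one>\<^bsub>C u n\<^esub>)\<rparr>"

definition sys_prod_diff :: "(nat \<Rightarrow> int \<Rightarrow> 'e \<Rightarrow> 'e) \<Rightarrow> int \<Rightarrow> (nat \<Rightarrow> 'e) \<Rightarrow> (nat \<Rightarrow> 'e)" where
  "sys_prod_diff dC n x = (\<lambda>u. dC u n (x u))"

definition one_minus_nu :: "(nat \<Rightarrow> int \<Rightarrow> ('e, 'x) monoid_scheme) \<Rightarrow> (nat \<Rightarrow> int \<Rightarrow> 'e \<Rightarrow> 'e)
     \<Rightarrow> int \<Rightarrow> (nat \<Rightarrow> 'e) \<Rightarrow> (nat \<Rightarrow> 'e)" where
  "one_minus_nu C \<nu> n x = (\<lambda>u. x u \<otimes>\<^bsub>C u n\<^esub> inv\<^bsub>C u n\<^esub> (\<nu> u n (x (Suc u))))"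

definition lim_grp :: "(nat \<Rightarrow> int \<Rightarrow> ('e, 'x) monoid_scheme) \<Rightarrow> (nat \<Rightarrow> int \<Rightarrow> 'e \<Rightarrow> 'e)
     \<Rightarrow> int \<Rightarrow> (nat \<Rightarrow> 'e) monoid" where
  "lim_grp C \<nu> n = (sys_prod C n)\<lparr>carrier :=
     {x \<in> carrier (sys_prod C n). one_minus_nu C \<nu> n x = \<one>\<^bsub>sys_prod C n\<^esub>}\<rparr>"

definition lim1_grp :: "(nat \<Rightarrow> int \<Rightarrow> ('e, 'x) monoid_scheme) \<Rightarrow> (nat \<Rightarrow> int \<Rightarrow> 'e \<Rightarrow> 'e)
     \<Rightarrow> int \<Rightarrow> (nat \<Rightarrow> 'e) set monoid" where
  "lim1_grp C \<nu> = quot_grp (sys_prod C) (\<lambda>n. one_minus_nu C \<nu> n ` carrier (sys_prod C n))"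

definition lim1_diff :: "(nat \<Rightarrow> int \<Rightarrow> ('e, 'x) monoid_scheme) \<Rightarrow> (nat \<Rightarrow> int \<Rightarrow> 'e \<Rightarrow> 'e)
     \<Rightarrow> (nat \<Rightarrow> int \<Rightarrow> 'e \<Rightarrow> 'e) \<Rightarrow> int \<Rightarrow> (nat \<Rightarrow> 'e) set \<Rightarrow> (nat \<Rightarrow> 'e) set" where
  "lim1_diff C \<nu> dC = quot_diff (sys_prod C) (sys_prod_diff dC)
     (\<lambda>n. one_minus_nu C \<nu> n ` carrier (sys_prod C n))"

definition qsys :: "'r ring \<Rightarrow> (int \<Rightarrow> ('r, 'a) module) \<Rightarrow> (int \<Rightarrow> ('r, 'b) module) \<Rightarrow> int
     \<Rightarrow> nat \<Rightarrow> int \<Rightarrow> (int \<Rightarrow> ('a, 'b) tens) set monoid" where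
  "qsys R X Y k u = quot_grp (tsum R X Y) (tsub R X Y (k - int u))"

definition qsys_diff :: "'r ring \<Rightarrow> (int \<Rightarrow> ('r, 'a) module) \<Rightarrow> (int \<Rightarrow> 'a \<Rightarrow> 'a)
     \<Rightarrow> (int \<Rightarrow> ('r, 'b) module) \<Rightarrow> (int \<Rightarrow> 'b \<Rightarrow> 'b) \<Rightarrow> int
     \<Rightarrow> nat \<Rightarrow> int \<Rightarrow> (int \<Rightarrow> ('a, 'b) tens) set \<Rightarrow> (int \<Rightarrow> ('a, 'b) tens) set" where
  "qsys_diff R X dX Y dY k u = quot_diff (tsum R X Y) (tdiff R X dX Y dY) (tsub R X Y (k - int u))"

definition qsys_nu :: "'r ring \<Rightarrow> (int \<Rightarrow> ('r, 'a) module) \<Rightarrow> (int \<Rightarrow> ('r, 'b) module) \<Rightarrow> int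
     \<Rightarrow> nat \<Rightarrow> int \<Rightarrow> (int \<Rightarrow> ('a, 'b) tens) set \<Rightarrow> (int \<Rightarrow> ('a, 'b) tens) set" where
  "qsys_nu R X Y k u n S = tsub R X Y (k - int u) n #>\<^bsub>tsum R X Y n\<^esub> (SOME x. x \<in> S)"

definition tsys :: "'r ring \<Rightarrow> (int \<Rightarrow> ('r, 'a) module) \<Rightarrow> (int \<Rightarrow> ('r, 'b) module) \<Rightarrow> int
     \<Rightarrow> nat \<Rightarrow> int \<Rightarrow> (int \<Rightarrow> ('a, 'b) tens) monoid" where
  "tsys R X Y k u = tsum R X (trunc Y (k - int u))"

definition tsys_diff :: "'r ring \<Rightarrow> (int \<Rightarrow> ('r, 'a) module) \<Rightarrow> (int \<Rightarrow> 'a \<Rightarrow> 'a)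
     \<Rightarrow> (int \<Rightarrow> ('r, 'b) module) \<Rightarrow> (int \<Rightarrow> 'b \<Rightarrow> 'b) \<Rightarrow> int
     \<Rightarrow> nat \<Rightarrow> int \<Rightarrow> (int \<Rightarrow> ('a, 'b) tens) \<Rightarrow> (int \<Rightarrow> ('a, 'b) tens)" where
  "tsys_diff R X dX Y dY k u = tdiff R X dX (trunc Y (k - int u)) dY"

definition tsys_nu :: "'r ring \<Rightarrow> (int \<Rightarrow> ('r, 'a) module) \<Rightarrow> (int \<Rightarrow> ('r, 'b) module) \<Rightarrow> int
     \<Rightarrow> nat \<Rightarrow> int \<Rightarrow> (int \<Rightarrow> ('a, 'b) tens) \<Rightarrow> (int \<Rightarrow> ('a, 'b) tens)" where
  "tsys_nu R X Y k u = tincl R X (trunc Y (k - int u))"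

end

(*
  Fix a degree n and write T_i = X_i \<otimes> Y_{n-i}. Since Y_j = 0 for j > k, only the components
  with i \<ge> n - k can be non-zero, and X \<otimes> Y_{\<le>k-u} consists of the families supported on
  i \<ge> n - k + u.

  Modulo X \<otimes> Y_{\<le>k-u} a family is determined by its finitely many components with
  n - k \<le> i < n - k + u. A compatible sequence of such classes therefore amounts to an arbitrary
  family (T_i)_i, which identifies the unbounded tensor product with the inverse limit.

  For lim\<^sup>1, send a family f to its diagonal, the element of \<Prod>_u X \<otimes> Y_{\<le>k-u} whose u-th entry
  is f_{n-k+u}. The diagonal of f lies in the image of 1 - \<nu> iff f is finitely supported (the
  preimage is the sequence of tails of f), and modulo that image every element is congruent to a
  diagonal (via partial sums). This gives \<Prod>_i T_i / \<Coprod>_i T_i \<cong> coker (1 - \<nu>). In both cases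
  the maps commute with the differentials because the differential moves components by at most
  one index.
*)

theory Submission
  imports Defs "HOL-Algebra.Product_Groups"
begin

lemma FactGroup_induced_rcos:
  assumes N: "H \<lhd> G" and N': "H' \<lhd> G'" and hom: "\<Phi> \<in> hom G G'" and img: "\<Phi> ` H \<subseteq> H'"
    and a: "a \<in> carrier G"
  shows "H' #>\<^bsub>G'\<^esub> \<Phi> (SOME x. x \<in> H #>\<^bsub>G\<^esub> a) = H' #>\<^bsub>G'\<^esub> \<Phi> a"
proof -
  interpret N: normal H G by fact
  interpret N': normal H' G' by fact
  have "a \<in> H #>\<^bsub>G\<^esub> a" using a N.subgroup_axioms by (rule N.rcos_self)
  hence "(SOME x. x \<in> H #>\<^bsub>G\<^esub> a) \<in> H #>\<^bsub>G\<^esub> a" by (rule someI)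
  then obtain h where h: "h \<in> H" "(SOME x. x \<in> H #>\<^bsub>G\<^esub> a) = h \<otimes>\<^bsub>G\<^esub> a"
    unfolding r_coset_def by blast
  have "\<Phi> (h \<otimes>\<^bsub>G\<^esub> a) = \<Phi> h \<otimes>\<^bsub>G'\<^esub> \<Phi> a" using hom h(1) a N.subset by (simp add: hom_mult subsetD)
  moreover have "\<Phi> h \<in> H'" using img h(1) by blast
  moreover have "\<Phi> a \<in> carrier G'" using hom a by (simp add: hom_in_carrier)
  ultimately have "H' #>\<^bsub>G'\<^esub> \<Phi> (h \<otimes>\<^bsub>G\<^esub> a) = (H' #>\<^bsub>G'\<^esub> \<Phi> h) #>\<^bsub>G'\<^esub> \<Phi> a"
    using N'.subset by (simp add: N'.coset_mult_assoc subsetD)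
  also have "H' #>\<^bsub>G'\<^esub> \<Phi> h = H'" using \<open>\<Phi> h \<in> H'\<close> N'.is_group by (simp add: N'.rcos_const)
  finally show ?thesis using h by simp
qed

lemma FactGroup_induced_hom:
  assumes N: "H \<lhd> G" and N': "H' \<lhd> G'" and hom: "\<Phi> \<in> hom G G'" and img: "\<Phi> ` H \<subseteq> H'"
  shows "(\<lambda>S. H' #>\<^bsub>G'\<^esub> \<Phi> (SOME x. x \<in> S)) \<in> hom (G Mod H) (G' Mod H')"
proof (rule homI)
  interpret N: normal H G by fact
  interpret N': normal H' G' by fact
  note rcos = FactGroup_induced_rcos[OF assms]
  fix S assume "S \<in> carrier (G Mod H)"
  then obtain a where a: "a \<in> carrier G" "S = H #>\<^bsub>G\<^esub> a" by (auto simp: carrier_FactGroup)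
  show "H' #>\<^bsub>G'\<^esub> \<Phi> (SOME x. x \<in> S) \<in> carrier (G' Mod H')"
    using rcos[OF a(1)] a hom by (simp add: carrier_FactGroup hom_in_carrier)
next
  interpret N: normal H G by fact
  interpret N': normal H' G' by fact
  note rcos = FactGroup_induced_rcos[OF assms]
  fix S T assume "S \<in> carrier (G Mod H)" "T \<in> carrier (G Mod H)"
  then obtain a b where a: "a \<in> carrier G" "S = H #>\<^bsub>G\<^esub> a" and b: "b \<in> carrier G" "T = H #>\<^bsub>G\<^esub> b"
    by (auto simp: carrier_FactGroup)
  have ST: "S \<otimes>\<^bsub>G Mod H\<^esub> T = H #>\<^bsub>G\<^esub> (a \<otimes>\<^bsub>G\<^esub> b)" using a b by (simp add: N.rcos_sum)
  have "\<Phi> (a \<otimes>\<^bsub>G\<^esub> b) = \<Phi> a \<otimes>\<^bsub>G'\<^esub> \<Phi> b" using hom a b by (simp add: hom_mult)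
  then show "H' #>\<^bsub>G'\<^esub> \<Phi> (SOME x. x \<in> S \<otimes>\<^bsub>G Mod H\<^esub> T) =
      (H' #>\<^bsub>G'\<^esub> \<Phi> (SOME x. x \<in> S)) \<otimes>\<^bsub>G' Mod H'\<^esub> (H' #>\<^bsub>G'\<^esub> \<Phi> (SOME x. x \<in> T))"
    using ST rcos a b hom by (simp add: N'.rcos_sum hom_in_carrier)
qed

lemma FactGroup_induced_iso:
  assumes N: "H \<lhd> G" and N': "H' \<lhd> G'" and hom: "\<Phi> \<in> hom G G'" and img: "\<Phi> ` H \<subseteq> H'"
    and inj: "\<And>x. x \<in> carrier G \<Longrightarrow> \<Phi> x \<in> H' \<Longrightarrow> x \<in> H"
    and surj: "\<And>y. y \<in> carrier G' \<Longrightarrow> \<exists>x\<in>carrier G. y \<otimes>\<^bsub>G'\<^esub> inv\<^bsub>G'\<^esub> (\<Phi> x) \<in> H'"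
  shows "(\<lambda>S. H' #>\<^bsub>G'\<^esub> \<Phi> (SOME x. x \<in> S)) \<in> iso (G Mod H) (G' Mod H')"
proof -
  interpret N: normal H G by fact
  interpret N': normal H' G' by fact
  let ?\<psi> = "\<lambda>S. H' #>\<^bsub>G'\<^esub> \<Phi> (SOME x. x \<in> S)"
  note rcos = FactGroup_induced_rcos[OF N N' hom img]
  interpret gh: group_hom "G Mod H" "G' Mod H'" ?\<psi>
    using FactGroup_induced_hom[OF N N' hom img] N.factorgroup_is_group N'.factorgroup_is_group
    by (simp add: group_hom_axioms_def group_hom_def)
  show ?thesis unfolding gh.iso_iff
  proof (intro conjI subsetI ballI impI)
    fix T assume "T \<in> carrier (G' Mod H')"
    then obtain y where y: "y \<in> carrier G'" "T = H' #>\<^bsub>G'\<^esub> y" by (auto simp: carrier_FactGroup)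
    obtain x where x: "x \<in> carrier G" "y \<otimes>\<^bsub>G'\<^esub> inv\<^bsub>G'\<^esub> (\<Phi> x) \<in> H'" using surj[OF y(1)] by blast
    have px: "\<Phi> x \<in> carrier G'" using hom x by (simp add: hom_in_carrier)
    have "y \<in> H' #>\<^bsub>G'\<^esub> \<Phi> x" using N'.rcos_module_rev[OF N'.is_group px y(1) x(2)] .
    hence "H' #>\<^bsub>G'\<^esub> \<Phi> x = H' #>\<^bsub>G'\<^esub> y" using N'.repr_independence px N'.subgroup_axioms by blast
    then show "T \<in> ?\<psi> ` carrier (G Mod H)" using rcos[OF x(1)] y x(1)
      by (auto simp: carrier_FactGroup intro!: image_eqI[where x="H #>\<^bsub>G\<^esub> x"])
  next
    fix S assume S: "S \<in> carrier (G Mod H)" and e: "?\<psi> S = \<one>\<^bsub>G' Mod H'\<^esub>"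
    then obtain a where a: "a \<in> carrier G" "S = H #>\<^bsub>G\<^esub> a" by (auto simp: carrier_FactGroup)
    have pa: "\<Phi> a \<in> carrier G'" using hom a by (simp add: hom_in_carrier)
    have "H' #>\<^bsub>G'\<^esub> \<Phi> a = H'" using e rcos[OF a(1)] a by simp
    hence "\<Phi> a \<in> H'" using N'.coset_join1 pa N'.subgroup_axioms by blast
    hence "a \<in> H" using inj a by blast
    then show "S = \<one>\<^bsub>G Mod H\<^esub>" using a by (simp add: N.rcos_const[OF N.is_group])
  qed
qed

lemma rcos_eqI:
  assumes "group G" "subgroup H G" "a \<in> carrier G" "b \<in> carrier G" "a \<otimes>\<^bsub>G\<^esub> inv\<^bsub>G\<^esub> b \<in> H"
  shows "H #>\<^bsub>G\<^esub> a = H #>\<^bsub>G\<^esub> b"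
proof -
  interpret G: group G by fact
  have "a \<in> H #>\<^bsub>G\<^esub> b" using subgroup.rcos_module_rev[OF assms(2,1,4,3,5)] .
  then show ?thesis using G.repr_independence[OF _ assms(4,2)] by simp
qed

lemma hom_restrict_carrier:
  assumes "h \<in> hom G G'" "K \<subseteq> carrier G" "h ` K \<subseteq> K'"
  shows "h \<in> hom (G\<lparr>carrier := K\<rparr>) (G'\<lparr>carrier := K'\<rparr>)"
  using assms by (auto simp: hom_def subset_iff)

lemma comm_group_restrict:
  assumes "comm_group G" "subgroup H G" shows "comm_group (G\<lparr>carrier := H\<rparr>)"
proof (rule group.group_comm_groupI)
  show "group (G\<lparr>carrier := H\<rparr>)" using assms by (simp add: comm_group_def subgroup.subgroup_is_group)
qed (use assms in \<open>auto simp: comm_group_def comm_monoid.m_comm subgroup.mem_carrier\<close>)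

lemma comm_group_hom_one:
  assumes "h \<in> hom G H" "comm_group G" "comm_group H"
  shows "h \<one>\<^bsub>G\<^esub> = \<one>\<^bsub>H\<^esub>"
  using assms by (simp add: comm_group_def hom_one)

lemma subgroup_kernel_comm_group:
  assumes "comm_group G" "comm_group H" "h \<in> hom G H"
  shows "subgroup (kernel G H h) G"
  by (rule group_hom.subgroup_kernel) (use assms in \<open>auto simp: group_hom_def group_hom_axioms_def comm_group_def\<close>)

definition dprod :: "('i \<Rightarrow> ('e, 'x) monoid_scheme) \<Rightarrow> ('i \<Rightarrow> 'e) monoid" where
  "dprod G = product_group UNIV G"

lemma dprod_carrier [simp]: "f \<in> carrier (dprod G) \<longleftrightarrow> (\<forall>i. f i \<in> carrier (G i))"
  and dprod_mult [simp]: "f \<otimes>\<^bsub>dprod G\<^esub> g = (\<lambda>i. f i \<otimes>\<^bsub>G i\<^esub> g i)"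
  and dprod_one [simp]: "\<one>\<^bsub>dprod G\<^esub> = (\<lambda>i. \<one>\<^bsub>G i\<^esub>)"
  by (simp_all add: dprod_def PiE_UNIV_domain restrict_UNIV Pi_iff)

lemma comm_group_dprod:
  assumes "\<And>i. comm_group (G i)" shows "comm_group (dprod G)"
proof (rule group.group_comm_groupI)
  show "group (dprod G)" unfolding dprod_def using assms by (simp add: comm_group_def)
  show "x \<otimes>\<^bsub>dprod G\<^esub> y = y \<otimes>\<^bsub>dprod G\<^esub> x" if "x \<in> carrier (dprod G)" "y \<in> carrier (dprod G)" for x y
    using that assms by (auto simp: comm_group_def comm_monoid.m_comm)
qed

lemma dprod_inv:
  assumes "\<And>i. comm_group (G i)" "f \<in> carrier (dprod G)"
  shows "inv\<^bsub>dprod G\<^esub> f = (\<lambda>i. inv\<^bsub>G i\<^esub> (f i))"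
  using assms inv_product_group[of f UNIV G]
  by (simp add: dprod_def comm_group_def PiE_UNIV_domain restrict_UNIV)

definition dsum :: "('i \<Rightarrow> ('e, 'x) monoid_scheme) \<Rightarrow> ('i \<Rightarrow> 'e) set" where
  "dsum G = {f \<in> carrier (dprod G). finite {i. f i \<noteq> \<one>\<^bsub>G i\<^esub>}}"

lemma dsumI:
  assumes "\<And>i. f i \<in> carrier (G i)" "finite A" "\<And>i. f i \<noteq> \<one>\<^bsub>G i\<^esub> \<Longrightarrow> i \<in> A"
  shows "f \<in> dsum G"
  using assms by (auto simp: dsum_def intro: finite_subset)

lemma subgroup_dsum_vanishing:
  assumes G: "\<And>i. comm_group (G i)"
  shows "subgroup {f \<in> dsum G. \<forall>i. P i \<longrightarrow> f i = \<one>\<^bsub>G i\<^esub>} (dprod G)"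
proof -
  interpret FG: comm_group "dprod G" by (rule comm_group_dprod[OF G])
  have gi: "group (G i)" for i using G by (simp add: comm_group_def)
  show ?thesis
  proof (rule FG.subgroupI)
    show "{f \<in> dsum G. \<forall>i. P i \<longrightarrow> f i = \<one>\<^bsub>G i\<^esub>} \<subseteq> carrier (dprod G)" by (auto simp: dsum_def)
    show "{f \<in> dsum G. \<forall>i. P i \<longrightarrow> f i = \<one>\<^bsub>G i\<^esub>} \<noteq> {}"
      using gi by (auto simp: dsum_def intro!: exI[of _ "\<lambda>i. \<one>\<^bsub>G i\<^esub>"] group.is_monoid monoid.one_closed)
  next
    fix a assume a: "a \<in> {f \<in> dsum G. \<forall>i. P i \<longrightarrow> f i = \<one>\<^bsub>G i\<^esub>}"
    hence ac: "a \<in> carrier (dprod G)" by (simp add: dsum_def)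
    have "{i. inv\<^bsub>G i\<^esub> (a i) \<noteq> \<one>\<^bsub>G i\<^esub>} \<subseteq> {i. a i \<noteq> \<one>\<^bsub>G i\<^esub>}"
      using gi ac by (auto simp: group.inv_eq_1_iff)
    then show "inv\<^bsub>dprod G\<^esub> a \<in> {f \<in> dsum G. \<forall>i. P i \<longrightarrow> f i = \<one>\<^bsub>G i\<^esub>}"
      using a ac gi by (auto simp: dsum_def dprod_inv[OF G] group.inv_closed group.inv_eq_1_iff group.is_monoid monoid.inv_one intro: finite_subset)
  next
    fix a b assume a: "a \<in> {f \<in> dsum G. \<forall>i. P i \<longrightarrow> f i = \<one>\<^bsub>G i\<^esub>}"
      and b: "b \<in> {f \<in> dsum G. \<forall>i. P i \<longrightarrow> f i = \<one>\<^bsub>G i\<^esub>}"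
    have "{i. a i \<otimes>\<^bsub>G i\<^esub> b i \<noteq> \<one>\<^bsub>G i\<^esub>} \<subseteq> {i. a i \<noteq> \<one>\<^bsub>G i\<^esub>} \<union> {i. b i \<noteq> \<one>\<^bsub>G i\<^esub>}"
      using gi a b by (auto simp: dsum_def group.is_monoid monoid.l_one)
    then show "a \<otimes>\<^bsub>dprod G\<^esub> b \<in> {f \<in> dsum G. \<forall>i. P i \<longrightarrow> f i = \<one>\<^bsub>G i\<^esub>}"
      using a b gi by (auto simp: dsum_def group.is_monoid monoid.m_closed monoid.l_one intro: finite_subset)
  qed
qed

lemma subgroup_dsum:
  assumes G: "\<And>i. comm_group (G i)"
  shows "subgroup (dsum G) (dprod G)"
  using subgroup_dsum_vanishing[OF G, where P="\<lambda>i. False"] by simp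

lemma sys_prod_eq_dprod: "sys_prod C n = dprod (\<lambda>u. C u n)"
  by (simp add: sys_prod_def dprod_def product_group_def PiE_UNIV_domain restrict_UNIV Pi_def)

lemma one_minus_nu_hom:
  assumes C: "\<And>u. comm_group (C u n)" and nu: "\<And>u. \<nu> u n \<in> hom (C (Suc u) n) (C u n)"
  shows "one_minus_nu C \<nu> n \<in> hom (dprod (\<lambda>u. C u n)) (dprod (\<lambda>u. C u n))"
proof (rule homI)
  fix x assume x: "x \<in> carrier (dprod (\<lambda>u. C u n))"
  show "one_minus_nu C \<nu> n x \<in> carrier (dprod (\<lambda>u. C u n))"
    unfolding one_minus_nu_def dprod_carrier
  proof
    fix u
    interpret Cu: comm_group "C u n" by (rule C)
    have "\<nu> u n (x (Suc u)) \<in> carrier (C u n)" using x by (intro hom_in_carrier[OF nu]) simp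
    then show "x u \<otimes>\<^bsub>C u n\<^esub> inv\<^bsub>C u n\<^esub> \<nu> u n (x (Suc u)) \<in> carrier (C u n)" using x by simp
  qed
next
  fix x y assume x: "x \<in> carrier (dprod (\<lambda>u. C u n))" and y: "y \<in> carrier (dprod (\<lambda>u. C u n))"
  show "one_minus_nu C \<nu> n (x \<otimes>\<^bsub>dprod (\<lambda>u. C u n)\<^esub> y) =
        one_minus_nu C \<nu> n x \<otimes>\<^bsub>dprod (\<lambda>u. C u n)\<^esub> one_minus_nu C \<nu> n y"
    unfolding one_minus_nu_def dprod_mult
  proof (rule ext)
    fix u
    interpret Cu: comm_group "C u n" by (rule C)
    have a: "\<nu> u n (x (Suc u)) \<in> carrier (C u n)" "\<nu> u n (y (Suc u)) \<in> carrier (C u n)"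
      using x y by (auto intro: hom_in_carrier[OF nu])
    have b: "\<nu> u n (x (Suc u) \<otimes>\<^bsub>C (Suc u) n\<^esub> y (Suc u)) = \<nu> u n (x (Suc u)) \<otimes>\<^bsub>C u n\<^esub> \<nu> u n (y (Suc u))"
      using x y by (intro hom_mult[OF nu]) auto
    have xu: "x u \<in> carrier (C u n)" "y u \<in> carrier (C u n)" using x y by auto
    show "x u \<otimes>\<^bsub>C u n\<^esub> y u \<otimes>\<^bsub>C u n\<^esub> inv\<^bsub>C u n\<^esub> \<nu> u n (x (Suc u) \<otimes>\<^bsub>C (Suc u) n\<^esub> y (Suc u)) =
          x u \<otimes>\<^bsub>C u n\<^esub> inv\<^bsub>C u n\<^esub> \<nu> u n (x (Suc u)) \<otimes>\<^bsub>C u n\<^esub> (y u \<otimes>\<^bsub>C u n\<^esub> inv\<^bsub>C u n\<^esub> \<nu> u n (y (Suc u)))"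
      unfolding b using a xu by (simp add: Cu.inv_mult Cu.m_ac)
  qed
qed

lemma lim_grp_eq_kernel:
  "lim_grp C \<nu> n = (dprod (\<lambda>u. C u n))\<lparr>carrier := kernel (dprod (\<lambda>u. C u n)) (dprod (\<lambda>u. C u n)) (one_minus_nu C \<nu> n)\<rparr>"
  by (simp add: lim_grp_def sys_prod_eq_dprod kernel_def)

section \<open>Tensor products of premodules\<close>

text \<open>\<open>tensor_mod\<close> is defined for arbitrary module records; its functoriality only
  needs these closure properties, which hold for left modules, for right modules (as modules over
  \<open>opp_ring R\<close>) and for the truncations \<open>Y_{\<le>m}\<close>.\<close>

definition premodule :: "'r set \<Rightarrow> ('r, 'a) module \<Rightarrow> bool" where
  "premodule S A \<longleftrightarrow> (\<forall>a\<in>carrier A. \<forall>a'\<in>carrier A. a \<oplus>\<^bsub>A\<^esub> a' \<in> carrier A)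
     \<and> (\<forall>r\<in>S. \<forall>a\<in>carrier A. r \<odot>\<^bsub>A\<^esub> a \<in> carrier A)
     \<and> \<zero>\<^bsub>A\<^esub> \<in> carrier A \<and> \<zero>\<^bsub>A\<^esub> \<oplus>\<^bsub>A\<^esub> \<zero>\<^bsub>A\<^esub> = \<zero>\<^bsub>A\<^esub>"

definition premodule_hom :: "'r set \<Rightarrow> ('r, 'a) module \<Rightarrow> ('r, 'a) module \<Rightarrow> ('a \<Rightarrow> 'a) \<Rightarrow> bool" where
  "premodule_hom S A A' f \<longleftrightarrow> (\<forall>a\<in>carrier A. f a \<in> carrier A')
     \<and> (\<forall>a\<in>carrier A. \<forall>a'\<in>carrier A. f (a \<oplus>\<^bsub>A\<^esub> a') = f a \<oplus>\<^bsub>A'\<^esub> f a')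
     \<and> (\<forall>r\<in>S. \<forall>a\<in>carrier A. f (r \<odot>\<^bsub>A\<^esub> a) = r \<odot>\<^bsub>A'\<^esub> f a)"

lemma diff_in_free_Abelian_group:
  "x \<in> carrier (free_Abelian_group S) \<Longrightarrow> y \<in> carrier (free_Abelian_group S)
    \<Longrightarrow> x - y \<in> carrier (free_Abelian_group S)"
  using keys_diff[of x y] by auto

lemma tensor_rels_subset:
  assumes "premodule (carrier R) A" "premodule (carrier R) B"
  shows "tensor_rels R A B \<subseteq> carrier (free_Abelian_group (carrier A \<times> carrier B))"
  using assms unfolding tensor_rels_def premodule_def
  by (auto intro!: diff_in_free_Abelian_group)

lemma subgroup_tensor_subgroup:
  assumes "premodule (carrier R) A" "premodule (carrier R) B"
  shows "subgroup (tensor_subgroup R A B) (free_Abelian_group (carrier A \<times> carrier B))"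
  unfolding tensor_subgroup_def
  by (rule group.generate_is_subgroup[OF group_free_Abelian_group tensor_rels_subset[OF assms]])

lemma comm_group_tensor_mod:
  assumes "premodule (carrier R) A" "premodule (carrier R) B"
  shows "comm_group (tensor_mod R A B)"
  unfolding tensor_mod_def
  by (rule comm_group.abelian_FactGroup[OF abelian_free_Abelian_group subgroup_tensor_subgroup[OF assms]])

lemma normal_tensor_subgroup:
  assumes "premodule (carrier R) A" "premodule (carrier R) B"
  shows "tensor_subgroup R A B \<lhd> free_Abelian_group (carrier A \<times> carrier B)"
  by (rule comm_group.subgroup_imp_normal[OF abelian_free_Abelian_group subgroup_tensor_subgroup[OF assms]])

lemma frag_of_zero_in_tensor_subgroup:
  assumes "premodule (carrier R) A" "premodule (carrier R) B" "a \<in> carrier A"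
  shows "frag_of (a, \<zero>\<^bsub>B\<^esub>) \<in> tensor_subgroup R A B"
proof -
  let ?F = "free_Abelian_group (carrier A \<times> carrier B)"
  have z: "\<zero>\<^bsub>B\<^esub> \<in> carrier B" "\<zero>\<^bsub>B\<^esub> \<oplus>\<^bsub>B\<^esub> \<zero>\<^bsub>B\<^esub> = \<zero>\<^bsub>B\<^esub>" using assms(2) by (auto simp: premodule_def)
  have "frag_of (a, \<zero>\<^bsub>B\<^esub> \<oplus>\<^bsub>B\<^esub> \<zero>\<^bsub>B\<^esub>) - frag_of (a, \<zero>\<^bsub>B\<^esub>) - frag_of (a, \<zero>\<^bsub>B\<^esub>) \<in> tensor_rels R A B"
    unfolding tensor_rels_def using assms(3) z(1) by blast
  hence r: "- frag_of (a, \<zero>\<^bsub>B\<^esub>) \<in> tensor_rels R A B" using z(2) by simp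
  have "inv\<^bsub>?F\<^esub> (- frag_of (a, \<zero>\<^bsub>B\<^esub>)) \<in> tensor_subgroup R A B"
    unfolding tensor_subgroup_def by (rule generate.inv[OF r])
  moreover have "inv\<^bsub>?F\<^esub> (- frag_of (a, \<zero>\<^bsub>B\<^esub>)) = frag_of (a, \<zero>\<^bsub>B\<^esub>)"
    using assms(3) z(1) by (subst inv_free_Abelian_group) auto
  ultimately show ?thesis by simp
qed

lemma tensor_subgroup_eq_carrier:
  fixes R :: "'r ring" and A :: "('r, 'a) module" and B :: "('r, 'b) module"
  assumes "premodule (carrier R) A" "premodule (carrier R) B" "carrier B = {\<zero>\<^bsub>B\<^esub>}"
  shows "tensor_subgroup R A B = carrier (free_Abelian_group (carrier A \<times> carrier B))"
proof
  let ?F = "free_Abelian_group (carrier A \<times> carrier B)"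
  interpret S: subgroup "tensor_subgroup R A B" ?F by (rule subgroup_tensor_subgroup[OF assms(1,2)])
  show "tensor_subgroup R A B \<subseteq> carrier ?F" by (rule S.subset)
  show "carrier ?F \<subseteq> tensor_subgroup R A B"
  proof
    fix c assume "c \<in> carrier ?F"
    hence "Poly_Mapping.keys c \<subseteq> carrier A \<times> carrier B" by simp
    then show "c \<in> tensor_subgroup R A B"
    proof (rule free_Abelian_group_induct)
      show "0 \<in> tensor_subgroup R A B" using S.one_closed by simp
    next
      fix x y :: "'a \<times> 'b \<Rightarrow>\<^sub>0 int"
      assume xy: "Poly_Mapping.keys x \<subseteq> carrier A \<times> carrier B" "Poly_Mapping.keys y \<subseteq> carrier A \<times> carrier B"
        "x \<in> tensor_subgroup R A B" "y \<in> tensor_subgroup R A B"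
      have "x \<otimes>\<^bsub>?F\<^esub> inv\<^bsub>?F\<^esub> y \<in> tensor_subgroup R A B" using xy by blast
      then show "x - y \<in> tensor_subgroup R A B" using xy by simp
    next
      fix p assume "p \<in> carrier A \<times> carrier B"
      then obtain a where "p = (a, \<zero>\<^bsub>B\<^esub>)" "a \<in> carrier A" using assms(3) by auto
      then show "frag_of p \<in> tensor_subgroup R A B" using frag_of_zero_in_tensor_subgroup[OF assms(1,2)] by simp
    qed
  qed
qed

lemma tensor_mod_trivial:
  fixes R :: "'r ring" and A :: "('r, 'a) module" and B :: "('r, 'b) module"
  assumes "premodule (carrier R) A" "premodule (carrier R) B" "carrier B = {\<zero>\<^bsub>B\<^esub>}"
  shows "carrier (tensor_mod R A B) = {\<one>\<^bsub>tensor_mod R A B\<^esub>}"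
proof -
  let ?F = "free_Abelian_group (carrier A \<times> carrier B)"
  interpret S: subgroup "tensor_subgroup R A B" ?F by (rule subgroup_tensor_subgroup[OF assms(1,2)])
  have e: "tensor_subgroup R A B = carrier ?F" by (rule tensor_subgroup_eq_carrier[OF assms])
  have "tensor_subgroup R A B #>\<^bsub>?F\<^esub> c = tensor_subgroup R A B" if "c \<in> carrier ?F" for c
    using S.rcos_const[OF group_free_Abelian_group] that e by simp
  moreover have "(0::'a \<times> 'b \<Rightarrow>\<^sub>0 int) \<in> carrier ?F" by simp
  ultimately have "carrier (?F Mod tensor_subgroup R A B) = {tensor_subgroup R A B}"
    unfolding carrier_FactGroup by force
  then show ?thesis unfolding tensor_mod_def by simp
qed

definition frag_tensor :: "('a \<Rightarrow> 'a) \<Rightarrow> ('b \<Rightarrow> 'b) \<Rightarrow> ('a \<times> 'b \<Rightarrow>\<^sub>0 int) \<Rightarrow> ('a \<times> 'b \<Rightarrow>\<^sub>0 int)" where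
  "frag_tensor f g = frag_extend (\<lambda>(a, b). frag_of (f a, g b))"

lemma frag_tensor_hom:
  assumes "\<And>a. a \<in> carrier A \<Longrightarrow> f a \<in> carrier A'" "\<And>b. b \<in> carrier B \<Longrightarrow> g b \<in> carrier B'"
  shows "frag_tensor f g \<in> hom (free_Abelian_group (carrier A \<times> carrier B)) (free_Abelian_group (carrier A' \<times> carrier B'))"
proof (rule homI)
  fix c assume "c \<in> carrier (free_Abelian_group (carrier A \<times> carrier B))"
  hence c: "Poly_Mapping.keys c \<subseteq> carrier A \<times> carrier B" by simp
  have "Poly_Mapping.keys (frag_tensor f g c) \<subseteq> (\<Union>x \<in> Poly_Mapping.keys c. Poly_Mapping.keys ((\<lambda>(a, b). frag_of (f a, g b)) x))"
    unfolding frag_tensor_def by (rule keys_frag_extend)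
  also have "\<dots> \<subseteq> carrier A' \<times> carrier B'" using c assms by (auto split: prod.splits)
  finally show "frag_tensor f g c \<in> carrier (free_Abelian_group (carrier A' \<times> carrier B'))" by simp
qed (simp add: frag_tensor_def frag_extend_add)

lemma frag_tensor_tensor_rels:
  assumes f: "premodule_hom (carrier R) A A' f" and g: "premodule_hom (carrier R) B B' g"
    and r: "r \<in> tensor_rels R A B"
  shows "frag_tensor f g r \<in> tensor_rels R A' B'"
proof -
  have ev: "frag_tensor f g (frag_of x - frag_of y - frag_of z)
      = frag_of (f (fst x), g (snd x)) - frag_of (f (fst y), g (snd y)) - frag_of (f (fst z), g (snd z))"
    "frag_tensor f g (frag_of x - frag_of y) = frag_of (f (fst x), g (snd x)) - frag_of (f (fst y), g (snd y))"
    for x y z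
    by (simp_all add: frag_tensor_def frag_extend_diff case_prod_unfold)
  have fc: "f a \<in> carrier A'" if "a \<in> carrier A" for a using f that by (simp add: premodule_hom_def)
  have gc: "g b \<in> carrier B'" if "b \<in> carrier B" for b using g that by (simp add: premodule_hom_def)
  from r consider
      (add_left) a a' b where "r = frag_of (a \<oplus>\<^bsub>A\<^esub> a', b) - frag_of (a, b) - frag_of (a', b)"
        "a \<in> carrier A" "a' \<in> carrier A" "b \<in> carrier B"
    | (add_right) a b b' where "r = frag_of (a, b \<oplus>\<^bsub>B\<^esub> b') - frag_of (a, b) - frag_of (a, b')"
        "a \<in> carrier A" "b \<in> carrier B" "b' \<in> carrier B"
    | (balanced) s a b where "r = frag_of (s \<odot>\<^bsub>A\<^esub> a, b) - frag_of (a, s \<odot>\<^bsub>B\<^esub> b)"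
        "s \<in> carrier R" "a \<in> carrier A" "b \<in> carrier B"
    unfolding tensor_rels_def by blast
  then show ?thesis
  proof cases
    case add_left
    then have e: "frag_tensor f g r = frag_of (f a \<oplus>\<^bsub>A'\<^esub> f a', g b) - frag_of (f a, g b) - frag_of (f a', g b)"
      using f by (simp add: ev premodule_hom_def)
    then show ?thesis unfolding tensor_rels_def e using add_left fc gc by blast
  next
    case add_right
    then have e: "frag_tensor f g r = frag_of (f a, g b \<oplus>\<^bsub>B'\<^esub> g b') - frag_of (f a, g b) - frag_of (f a, g b')"
      using g by (simp add: ev premodule_hom_def)
    then show ?thesis unfolding tensor_rels_def e using add_right fc gc by blast
  next
    case balanced
    then have e: "frag_tensor f g r = frag_of (s \<odot>\<^bsub>A'\<^esub> f a, g b) - frag_of (f a, s \<odot>\<^bsub>B'\<^esub> g b)"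
      using f g by (simp add: ev premodule_hom_def)
    then show ?thesis unfolding tensor_rels_def e using balanced fc gc by blast
  qed
qed

lemma frag_tensor_tensor_subgroup:
  assumes A: "premodule (carrier R) A" "premodule (carrier R) B" "premodule (carrier R) A'" "premodule (carrier R) B'"
    and f: "premodule_hom (carrier R) A A' f" and g: "premodule_hom (carrier R) B B' g"
  shows "frag_tensor f g ` tensor_subgroup R A B \<subseteq> tensor_subgroup R A' B'"
proof
  let ?F = "free_Abelian_group (carrier A \<times> carrier B)"
  let ?F' = "free_Abelian_group (carrier A' \<times> carrier B')"
  interpret S': subgroup "tensor_subgroup R A' B'" ?F' by (rule subgroup_tensor_subgroup[OF A(3,4)])
  have hom: "frag_tensor f g \<in> hom ?F ?F'" by (rule frag_tensor_hom) (use f g in \<open>auto simp: premodule_hom_def\<close>)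
  note rel = frag_tensor_tensor_rels[OF f g]
  fix y assume "y \<in> frag_tensor f g ` tensor_subgroup R A B"
  then obtain x where x: "x \<in> generate ?F (tensor_rels R A B)" "y = frag_tensor f g x"
    unfolding tensor_subgroup_def by blast
  have "frag_tensor f g x \<in> tensor_subgroup R A' B'" using x(1)
  proof (induction rule: generate.induct)
    case one show ?case using S'.one_closed by (simp add: frag_tensor_def)
  next
    case (incl h) show ?case unfolding tensor_subgroup_def by (rule generate.incl[OF rel[OF incl]])
  next
    case (inv h)
    have hc: "h \<in> carrier ?F" using tensor_rels_subset[OF A(1,2)] inv by blast
    have "inv\<^bsub>?F'\<^esub> (frag_tensor f g h) \<in> tensor_subgroup R A' B'"
      unfolding tensor_subgroup_def by (rule generate.inv[OF rel[OF inv]])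
    moreover have "frag_tensor f g h \<in> carrier ?F'" using hom hc by (rule hom_in_carrier)
    ultimately show ?case using hc by (simp add: frag_tensor_def frag_extend_minus)
  next
    case (eng h1 h2)
    then show ?case using S'.m_closed by (simp add: frag_tensor_def frag_extend_add)
  qed
  then show "y \<in> tensor_subgroup R A' B'" using x by simp
qed

lemma tensor_map_eq_induced:
  "tensor_map R A' B' f g = (\<lambda>S. tensor_subgroup R A' B' #>\<^bsub>free_Abelian_group (carrier A' \<times> carrier B')\<^esub> frag_tensor f g (SOME x. x \<in> S))"
  by (simp add: tensor_map_def frag_tensor_def fun_eq_iff)

lemma tensor_map_hom:
  assumes A: "premodule (carrier R) A" "premodule (carrier R) B" "premodule (carrier R) A'" "premodule (carrier R) B'"
    and f: "premodule_hom (carrier R) A A' f" and g: "premodule_hom (carrier R) B B' g"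
  shows "tensor_map R A' B' f g \<in> hom (tensor_mod R A B) (tensor_mod R A' B')"
  unfolding tensor_map_eq_induced tensor_mod_def
  by (rule FactGroup_induced_hom[OF normal_tensor_subgroup[OF A(1,2)] normal_tensor_subgroup[OF A(3,4)] frag_tensor_hom frag_tensor_tensor_subgroup[OF assms]])
     (use f g in \<open>auto simp: premodule_hom_def\<close>)

lemma tensor_map_id:
  assumes A: "premodule (carrier R) A" "premodule (carrier R) B" and C: "C \<in> carrier (tensor_mod R A B)"
  shows "tensor_map R A B (\<lambda>x. x) (\<lambda>y. y) C = C"
proof -
  let ?F = "free_Abelian_group (carrier A \<times> carrier B)"
  obtain c where c: "c \<in> carrier ?F" "C = tensor_subgroup R A B #>\<^bsub>?F\<^esub> c"
    using C by (auto simp: tensor_mod_def carrier_FactGroup)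
  have idh: "frag_tensor (\<lambda>x. x) (\<lambda>y. y) = (\<lambda>x. x)"
    by (rule ext, simp add: frag_tensor_def case_prod_unfold flip: frag_expansion)
  have "tensor_map R A B (\<lambda>x. x) (\<lambda>y. y) C = tensor_subgroup R A B #>\<^bsub>?F\<^esub> frag_tensor (\<lambda>x. x) (\<lambda>y. y) c"
    unfolding tensor_map_eq_induced c(2)
    by (rule FactGroup_induced_rcos[OF normal_tensor_subgroup[OF A(1,2)] normal_tensor_subgroup[OF A(1,2)] frag_tensor_hom _ c(1)]) (auto simp: idh)
  then show ?thesis using c by (simp add: idh)
qed

lemma abelian_group_idem_eq_zero:
  assumes "abelian_group M" "x \<in> carrier M" "x \<oplus>\<^bsub>M\<^esub> x = x"
  shows "x = \<zero>\<^bsub>M\<^esub>"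
proof -
  interpret abelian_group M by fact
  show ?thesis using assms(2,3) add.l_cancel_one[of x x] by simp
qed

lemma premodule_lmodule:
  assumes "lmodule R M" shows "premodule (carrier R) M"
proof -
  interpret abelian_group M using assms by (simp add: lmodule_def)
  show ?thesis using assms by (auto simp: premodule_def lmodule_def)
qed

lemma premodule_hom_lmod_hom:
  assumes "f \<in> lmod_hom R M N" shows "premodule_hom (carrier R) M N f"
  using assms by (auto simp: premodule_hom_def lmod_hom_def)

lemma lmod_hom_zero:
  assumes "lmodule R M" "lmodule R N" "f \<in> lmod_hom R M N"
  shows "f \<zero>\<^bsub>M\<^esub> = \<zero>\<^bsub>N\<^esub>"
proof -
  interpret M: abelian_group M using assms by (simp add: lmodule_def)
  have N: "abelian_group N" using assms by (simp add: lmodule_def)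
  have "\<forall>x\<in>carrier M. \<forall>y\<in>carrier M. f (x \<oplus>\<^bsub>M\<^esub> y) = f x \<oplus>\<^bsub>N\<^esub> f y" using assms(3) by (simp add: lmod_hom_def)
  hence "f (\<zero>\<^bsub>M\<^esub> \<oplus>\<^bsub>M\<^esub> \<zero>\<^bsub>M\<^esub>) = f \<zero>\<^bsub>M\<^esub> \<oplus>\<^bsub>N\<^esub> f \<zero>\<^bsub>M\<^esub>" using M.zero_closed by blast
  hence "f \<zero>\<^bsub>M\<^esub> = f \<zero>\<^bsub>M\<^esub> \<oplus>\<^bsub>N\<^esub> f \<zero>\<^bsub>M\<^esub>" by simp
  then show ?thesis using abelian_group_idem_eq_zero[OF N] assms(3) by (simp add: lmod_hom_def)
qed

lemma lmodule_smult_zero: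
  assumes "lmodule R M" "r \<in> carrier R"
  shows "r \<odot>\<^bsub>M\<^esub> \<zero>\<^bsub>M\<^esub> = \<zero>\<^bsub>M\<^esub>"
proof -
  interpret M: abelian_group M using assms by (simp add: lmodule_def)
  have c: "r \<odot>\<^bsub>M\<^esub> \<zero>\<^bsub>M\<^esub> \<in> carrier M" using assms by (simp add: lmodule_def)
  have "\<forall>a\<in>carrier R. \<forall>x\<in>carrier M. \<forall>y\<in>carrier M. a \<odot>\<^bsub>M\<^esub> (x \<oplus>\<^bsub>M\<^esub> y) = a \<odot>\<^bsub>M\<^esub> x \<oplus>\<^bsub>M\<^esub> a \<odot>\<^bsub>M\<^esub> y"
    using assms by (simp add: lmodule_def)
  hence "r \<odot>\<^bsub>M\<^esub> (\<zero>\<^bsub>M\<^esub> \<oplus>\<^bsub>M\<^esub> \<zero>\<^bsub>M\<^esub>) = r \<odot>\<^bsub>M\<^esub> \<zero>\<^bsub>M\<^esub> \<oplus>\<^bsub>M\<^esub> r \<odot>\<^bsub>M\<^esub> \<zero>\<^bsub>M\<^esub>"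
    using assms(2) M.zero_closed by blast
  hence "r \<odot>\<^bsub>M\<^esub> \<zero>\<^bsub>M\<^esub> = r \<odot>\<^bsub>M\<^esub> \<zero>\<^bsub>M\<^esub> \<oplus>\<^bsub>M\<^esub> r \<odot>\<^bsub>M\<^esub> \<zero>\<^bsub>M\<^esub>" by simp
  then show ?thesis using abelian_group_idem_eq_zero[OF M.abelian_group_axioms c] by simp
qed

definition tensor_complexes :: "'r ring \<Rightarrow> (int \<Rightarrow> ('r, 'a) module) \<Rightarrow> (int \<Rightarrow> 'a \<Rightarrow> 'a)
     \<Rightarrow> (int \<Rightarrow> ('r, 'b) module) \<Rightarrow> (int \<Rightarrow> 'b \<Rightarrow> 'b) \<Rightarrow> bool" where
  "tensor_complexes R X dX Y dY \<longleftrightarrow> (\<forall>i. premodule (carrier R) (X i)) \<and> (\<forall>i. premodule_hom (carrier R) (X i) (X (i - 1)) (dX i))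
     \<and> (\<forall>j. premodule (carrier R) (Y j)) \<and> (\<forall>j. premodule_hom (carrier R) (Y j) (Y (j - 1)) (dY j))
     \<and> (\<forall>j. dY j \<zero>\<^bsub>Y j\<^esub> = \<zero>\<^bsub>Y (j - 1)\<^esub>) \<and> (\<forall>j. \<forall>r\<in>carrier R. r \<odot>\<^bsub>Y j\<^esub> \<zero>\<^bsub>Y j\<^esub> = \<zero>\<^bsub>Y j\<^esub>)"

lemma carrier_opp_ring: "carrier (opp_ring R) = carrier R"
  by (simp add: opp_ring_def)

lemma tensor_complexesI:
  assumes "is_complex (opp_ring R) X dX" "is_complex R Y dY"
  shows "tensor_complexes R X dX Y dY"
proof -
  have X: "lmodule (opp_ring R) (X i)" "dX i \<in> lmod_hom (opp_ring R) (X i) (X (i - 1))" for i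
    using assms by (auto simp: is_complex_def)
  have Y: "lmodule R (Y j)" "dY j \<in> lmod_hom R (Y j) (Y (j - 1))" for j
    using assms by (auto simp: is_complex_def)
  show ?thesis unfolding tensor_complexes_def
    using premodule_lmodule[OF X(1)] premodule_hom_lmod_hom[OF X(2)] premodule_lmodule[OF Y(1)] premodule_hom_lmod_hom[OF Y(2)]
      lmod_hom_zero[OF Y(1) Y(1) Y(2)] lmodule_smult_zero[OF Y(1)]
    by (simp add: carrier_opp_ring)
qed

definition vanishes_above :: "(int \<Rightarrow> ('r, 'b) module) \<Rightarrow> int \<Rightarrow> bool" where
  "vanishes_above Y k \<longleftrightarrow> (\<forall>j>k. carrier (Y j) = {\<zero>\<^bsub>Y j\<^esub>})"

lemma vanishes_above_sup:
  assumes "bdd_above_with_sup Y k" shows "vanishes_above Y k"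
  unfolding vanishes_above_def
proof (intro allI impI)
  fix j assume j: "k < j"
  have "j \<notin> nonzero_degrees Y"
  proof
    assume "j \<in> nonzero_degrees Y"
    hence "j \<le> Sup (nonzero_degrees Y)" using assms by (auto simp: bdd_above_with_sup_def intro: cSup_upper)
    thus False using assms j by (simp add: bdd_above_with_sup_def)
  qed
  then show "carrier (Y j) = {\<zero>\<^bsub>Y j\<^esub>}" by (simp add: nonzero_degrees_def)
qed

lemma trunc_in [simp]: "j \<le> m \<Longrightarrow> trunc Y m j = Y j"
  by (simp add: trunc_def)

lemma trunc_out:
  assumes "m < j"
  shows "carrier (trunc Y m j) = {\<zero>\<^bsub>Y j\<^esub>}" "zero (trunc Y m j) = \<zero>\<^bsub>Y j\<^esub>"
    "add (trunc Y m j) = add (Y j)" "smult (trunc Y m j) = smult (Y j)"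
  using assms by (simp_all add: trunc_def)

lemma trunc_ops:
  shows "zero (trunc Y m j) = \<zero>\<^bsub>Y j\<^esub>" "add (trunc Y m j) = add (Y j)" "smult (trunc Y m j) = smult (Y j)"
  by (simp_all add: trunc_def)

lemma trunc_top:
  assumes "vanishes_above Y k" "k \<le> m" shows "trunc Y m = Y"
proof
  fix j show "trunc Y m j = Y j"
  proof (cases "j \<le> m")
    case False
    then have "carrier (Y j) = {\<zero>\<^bsub>Y j\<^esub>}" using assms by (simp add: vanishes_above_def)
    then show ?thesis using False by (simp add: trunc_def)
  qed simp
qed

lemma premodule_trunc:
  assumes "premodule S (Y j)" "\<forall>r\<in>S. r \<odot>\<^bsub>Y j\<^esub> \<zero>\<^bsub>Y j\<^esub> = \<zero>\<^bsub>Y j\<^esub>"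
  shows "premodule S (trunc Y m j)"
  using assms by (cases "j \<le> m") (auto simp: premodule_def trunc_def)

lemma premodule_hom_restrict:
  assumes "premodule_hom S A B f" "carrier A' \<subseteq> carrier A" "add A' = add A" "smult A' = smult A"
    "\<And>a. a \<in> carrier A' \<Longrightarrow> f a \<in> carrier B'" "add B' = add B" "smult B' = smult B"
  shows "premodule_hom S A' B' f"
proof -
  have "\<forall>a\<in>carrier A. \<forall>a'\<in>carrier A. f (add A a a') = add B (f a) (f a')"
    "\<forall>r\<in>S. \<forall>a\<in>carrier A. f (smult A r a) = smult B r (f a)"
    using assms(1) by (auto simp: premodule_hom_def)
  then show ?thesis using assms(2-) unfolding premodule_hom_def
  proof (intro conjI ballI)
    fix a a' assume "a \<in> carrier A'" "a' \<in> carrier A'"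
    then show "f (a \<oplus>\<^bsub>A'\<^esub> a') = f a \<oplus>\<^bsub>B'\<^esub> f a'"
      using assms(2,3,6) \<open>\<forall>a\<in>carrier A. \<forall>a'\<in>carrier A. f (add A a a') = add B (f a) (f a')\<close> by auto
  next
    fix r a assume "r \<in> S" "a \<in> carrier A'"
    then show "f (r \<odot>\<^bsub>A'\<^esub> a) = r \<odot>\<^bsub>B'\<^esub> f a"
      using assms(2,4,7) \<open>\<forall>r\<in>S. \<forall>a\<in>carrier A. f (smult A r a) = smult B r (f a)\<close> by auto
  qed (use assms(5) in auto)
qed

lemma premodule_hom_trunc_incl:
  assumes "premodule S (Y j)" "m' \<le> m"
  shows "premodule_hom S (trunc Y m' j) (trunc Y m j) (\<lambda>y. y)"
  using assms by (auto simp: premodule_hom_def trunc_def premodule_def)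

lemma premodule_hom_trunc_id:
  assumes "premodule S (Y j)"
  shows "premodule_hom S (trunc Y m j) (Y j) (\<lambda>y. y)"
  using assms by (auto simp: premodule_hom_def trunc_def premodule_def)

lemma premodule_hom_trunc_source:
  assumes "premodule_hom S (Y j) (Y (j - 1)) f" "premodule S (Y j)"
  shows "premodule_hom S (trunc Y m j) (Y (j - 1)) f"
  by (rule premodule_hom_restrict[OF assms(1)]) (use assms in \<open>auto simp: trunc_ops premodule_hom_def trunc_def premodule_def split: if_splits\<close>)

lemma tensor_complexes_trunc:
  assumes "tensor_complexes R X dX Y dY" shows "tensor_complexes R X dX (trunc Y m) dY"
proof -
  have Y: "premodule (carrier R) (Y j)" "premodule_hom (carrier R) (Y j) (Y (j - 1)) (dY j)" "dY j \<zero>\<^bsub>Y j\<^esub> = \<zero>\<^bsub>Y (j - 1)\<^esub>"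
    "\<forall>r\<in>carrier R. r \<odot>\<^bsub>Y j\<^esub> \<zero>\<^bsub>Y j\<^esub> = \<zero>\<^bsub>Y j\<^esub>" for j
    using assms by (auto simp: tensor_complexes_def)
  have "premodule_hom (carrier R) (trunc Y m j) (trunc Y m (j - 1)) (dY j)" for j
  proof (cases "j \<le> m")
    case True then show ?thesis using Y(2)[of j] by (simp add: premodule_hom_def)
  next
    case False
    have z: "\<zero>\<^bsub>Y (j - 1)\<^esub> \<in> carrier (trunc Y m (j - 1))"
      using Y(1)[of "j - 1"] by (auto simp: trunc_def premodule_def)
    show ?thesis
      by (rule premodule_hom_restrict[OF Y(2)[of j]]) (use False Y(3)[of j] z Y(1)[of j] in \<open>auto simp: trunc_ops trunc_out premodule_def\<close>)
  qed
  then show ?thesis using assms premodule_trunc[OF Y(1) Y(4)]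
    by (auto simp: tensor_complexes_def trunc_ops)
qed

lemma trunc_carrier_mono:
  assumes "premodule S (Y j)" "m \<le> M" shows "carrier (trunc Y m j) \<subseteq> carrier (trunc Y M j)"
  using assms by (auto simp: trunc_def premodule_def)

lemma trunc_trivial: "m < j \<Longrightarrow> carrier (trunc Y m j) = {\<zero>\<^bsub>trunc Y m j\<^esub>}"
  by (simp add: trunc_out)

definition tdiff_left :: "'r ring \<Rightarrow> (int \<Rightarrow> ('r, 'a) module) \<Rightarrow> (int \<Rightarrow> 'a \<Rightarrow> 'a)
     \<Rightarrow> (int \<Rightarrow> ('r, 'b) module) \<Rightarrow> int \<Rightarrow> int \<Rightarrow> ('a, 'b) tens \<Rightarrow> ('a, 'b) tens" where
  "tdiff_left R X dX Y n i = tensor_map R (X i) (Y (n - 1 - i)) (dX (i + 1)) (\<lambda>y. y)"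

definition tdiff_right :: "'r ring \<Rightarrow> (int \<Rightarrow> ('r, 'a) module)
     \<Rightarrow> (int \<Rightarrow> ('r, 'b) module) \<Rightarrow> (int \<Rightarrow> 'b \<Rightarrow> 'b) \<Rightarrow> int \<Rightarrow> int \<Rightarrow> ('a, 'b) tens \<Rightarrow> ('a, 'b) tens" where
  "tdiff_right R X Y dY n i = tensor_map R (X i) (Y (n - 1 - i)) (\<lambda>x. x) (dY (n - i))"

definition koszul_sign :: "('e, 'x) monoid_scheme \<Rightarrow> int \<Rightarrow> 'e \<Rightarrow> 'e" where
  "koszul_sign G i c = (if even i then c else inv\<^bsub>G\<^esub> c)"

lemma tdiff_eq_components:
  "tdiff R X dX Y dY n f i = tdiff_left R X dX Y n i (f (i + 1)) \<otimes>\<^bsub>tcomp R X Y (n - 1) i\<^esub>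
      koszul_sign (tcomp R X Y (n - 1) i) i (tdiff_right R X Y dY n i (f i))"
  by (simp add: tdiff_def tdiff_left_def tdiff_right_def koszul_sign_def Let_def)

lemma koszul_sign_hom: "comm_group G \<Longrightarrow> koszul_sign G i \<in> hom G G"
  by (rule homI) (auto simp: koszul_sign_def comm_group_def group.inv_closed comm_group.inv_mult)

lemma koszul_sign_one: "group G \<Longrightarrow> koszul_sign G i \<one>\<^bsub>G\<^esub> = \<one>\<^bsub>G\<^esub>"
  by (simp add: koszul_sign_def monoid.inv_one group.is_monoid)

lemma comm_group_tcomp:
  assumes "tensor_complexes R X dX Y dY" shows "comm_group (tcomp R X Y n i)"
  using assms unfolding tcomp_def tensor_complexes_def by (auto intro: comm_group_tensor_mod)

lemma tcomp_trivial:
  assumes "tensor_complexes R X dX Y dY" "carrier (Y (n - i)) = {\<zero>\<^bsub>Y (n - i)\<^esub>}"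
  shows "carrier (tcomp R X Y n i) = {\<one>\<^bsub>tcomp R X Y n i\<^esub>}"
  using assms unfolding tcomp_def tensor_complexes_def by (intro tensor_mod_trivial) auto

lemma tprod_eq_dprod: "tprod R X Y n = dprod (tcomp R X Y n)"
  by (simp add: tprod_def dprod_def product_group_def PiE_UNIV_domain restrict_UNIV Pi_def)

lemma tsum_eq_dsum: "tsum R X Y n = (dprod (tcomp R X Y n))\<lparr>carrier := dsum (tcomp R X Y n)\<rparr>"
  and tsum_carrier_eq_dsum: "tsum_carrier R X Y n = dsum (tcomp R X Y n)"
  by (simp_all add: tsum_def tprod_def dprod_def product_group_def PiE_UNIV_domain restrict_UNIV Pi_def dsum_def tsum_carrier_def)

lemma tdiff_left_hom_gen:
  assumes X: "\<forall>i. premodule (carrier R) (X i)" "\<forall>i. premodule_hom (carrier R) (X i) (X (i - 1)) (dX i)"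
    and Y1: "premodule (carrier R) (Y1 (n - 1 - i))" and Y: "premodule (carrier R) (Y (n - 1 - i))"
    and m: "premodule_hom (carrier R) (Y1 (n - 1 - i)) (Y (n - 1 - i)) (\<lambda>y. y)"
  shows "tdiff_left R X dX Y n i \<in> hom (tcomp R X Y1 n (i + 1)) (tcomp R X Y (n - 1) i)"
proof -
  have e: "n - (i + 1) = n - 1 - i" by simp
  have dx: "premodule_hom (carrier R) (X (i + 1)) (X i) (dX (i + 1))" using spec[OF X(2), of "i+1"] by simp
  show ?thesis unfolding tdiff_left_def tcomp_def e
    by (rule tensor_map_hom[OF spec[OF X(1)] Y1 spec[OF X(1)] Y dx m])
qed

lemma tdiff_right_hom_gen:
  assumes X: "\<forall>i. premodule (carrier R) (X i)"
    and Y1: "premodule (carrier R) (Y1 (n - i))" and Y: "premodule (carrier R) (Y (n - 1 - i))"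
    and m: "premodule_hom (carrier R) (Y1 (n - i)) (Y (n - 1 - i)) (dY (n - i))"
  shows "tdiff_right R X Y dY n i \<in> hom (tcomp R X Y1 n i) (tcomp R X Y (n - 1) i)"
proof -
  have i: "premodule_hom (carrier R) (X i) (X i) (\<lambda>x. x)" by (simp add: premodule_hom_def)
  show ?thesis unfolding tdiff_right_def tcomp_def
    by (rule tensor_map_hom[OF spec[OF X] Y1 spec[OF X] Y i m])
qed

lemma tdiff_left_hom:
  assumes "tensor_complexes R X dX Y dY"
  shows "tdiff_left R X dX Y n i \<in> hom (tcomp R X Y n (i + 1)) (tcomp R X Y (n - 1) i)"
  using assms unfolding tensor_complexes_def by (intro tdiff_left_hom_gen) (auto simp: premodule_hom_def)

lemma tdiff_right_hom:
  assumes "tensor_complexes R X dX Y dY"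
  shows "tdiff_right R X Y dY n i \<in> hom (tcomp R X Y n i) (tcomp R X Y (n - 1) i)"
proof -
  have e: "n - i - 1 = n - 1 - i" by simp
  show ?thesis using assms unfolding tensor_complexes_def
    by (intro tdiff_right_hom_gen) (auto simp: e dest: spec[of _ "n - i"])
qed

lemma tdiff_left_hom_trunc:
  assumes "tensor_complexes R X dX Y dY"
  shows "tdiff_left R X dX Y n i \<in> hom (tcomp R X (trunc Y m) n (i + 1)) (tcomp R X Y (n - 1) i)"
  using assms unfolding tensor_complexes_def
  by (intro tdiff_left_hom_gen) (auto intro: premodule_trunc premodule_hom_trunc_id)

lemma tdiff_right_hom_trunc:
  assumes "tensor_complexes R X dX Y dY"
  shows "tdiff_right R X Y dY n i \<in> hom (tcomp R X (trunc Y m) n i) (tcomp R X Y (n - 1) i)"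
proof -
  have e: "n - i - 1 = n - 1 - i" by simp
  have "premodule_hom (carrier R) (trunc Y m (n - i)) (Y (n - i - 1)) (dY (n - i))"
    using assms unfolding tensor_complexes_def by (intro premodule_hom_trunc_source) auto
  then show ?thesis using assms unfolding tensor_complexes_def
    by (intro tdiff_right_hom_gen) (auto simp: e intro: premodule_trunc)
qed

lemma tdiff_in_carrier:
  assumes c: "tensor_complexes R X dX Y dY" and f: "f \<in> carrier (dprod (tcomp R X Y n))"
  shows "tdiff R X dX Y dY n f i \<in> carrier (tcomp R X Y (n - 1) i)"
proof -
  let ?G = "tcomp R X Y (n - 1) i"
  interpret G: comm_group ?G by (rule comm_group_tcomp[OF c])
  have "tdiff_left R X dX Y n i (f (i + 1)) \<in> carrier ?G" using f by (intro hom_in_carrier[OF tdiff_left_hom[OF c]]) simp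
  moreover have "tdiff_right R X Y dY n i (f i) \<in> carrier ?G" using f by (intro hom_in_carrier[OF tdiff_right_hom[OF c]]) simp
  ultimately show ?thesis unfolding tdiff_eq_components koszul_sign_def by simp
qed

lemma tdiff_hom:
  assumes c: "tensor_complexes R X dX Y dY"
  shows "tdiff R X dX Y dY n \<in> hom (dprod (tcomp R X Y n)) (dprod (tcomp R X Y (n - 1)))"
proof (rule homI)
  fix f assume "f \<in> carrier (dprod (tcomp R X Y n))"
  then show "tdiff R X dX Y dY n f \<in> carrier (dprod (tcomp R X Y (n - 1)))"
    using tdiff_in_carrier[OF c] by simp
next
  fix f g assume f: "f \<in> carrier (dprod (tcomp R X Y n))" and g: "g \<in> carrier (dprod (tcomp R X Y n))"
  show "tdiff R X dX Y dY n (f \<otimes>\<^bsub>dprod (tcomp R X Y n)\<^esub> g) =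
        tdiff R X dX Y dY n f \<otimes>\<^bsub>dprod (tcomp R X Y (n - 1))\<^esub> tdiff R X dX Y dY n g"
  proof (rule ext)
    fix i
    let ?G = "tcomp R X Y (n - 1) i"
    interpret G: comm_group ?G by (rule comm_group_tcomp[OF c])
    have U: "tdiff_left R X dX Y n i \<in> hom (tcomp R X Y n (i + 1)) ?G" by (rule tdiff_left_hom[OF c])
    have V: "tdiff_right R X Y dY n i \<in> hom (tcomp R X Y n i) ?G" by (rule tdiff_right_hom[OF c])
    have S: "koszul_sign ?G i \<in> hom ?G ?G" by (rule koszul_sign_hom) (rule G.comm_group_axioms)
    have f1: "f (i + 1) \<in> carrier (tcomp R X Y n (i + 1))" "f i \<in> carrier (tcomp R X Y n i)" using f by auto
    have g1: "g (i + 1) \<in> carrier (tcomp R X Y n (i + 1))" "g i \<in> carrier (tcomp R X Y n i)" using g by auto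
    have Uc: "tdiff_left R X dX Y n i (f (i + 1)) \<in> carrier ?G" "tdiff_left R X dX Y n i (g (i + 1)) \<in> carrier ?G"
      using U f1 g1 by (simp_all add: hom_in_carrier)
    have Vc: "tdiff_right R X Y dY n i (f i) \<in> carrier ?G" "tdiff_right R X Y dY n i (g i) \<in> carrier ?G"
      using V f1 g1 by (simp_all add: hom_in_carrier)
    have Sc: "koszul_sign ?G i (tdiff_right R X Y dY n i (f i)) \<in> carrier ?G" "koszul_sign ?G i (tdiff_right R X Y dY n i (g i)) \<in> carrier ?G"
      using S Vc by (simp_all add: hom_in_carrier)
    show "tdiff R X dX Y dY n (f \<otimes>\<^bsub>dprod (tcomp R X Y n)\<^esub> g) i =
        (tdiff R X dX Y dY n f \<otimes>\<^bsub>dprod (tcomp R X Y (n - 1))\<^esub> tdiff R X dX Y dY n g) i"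
      unfolding tdiff_eq_components dprod_mult
      using hom_mult[OF U f1(1) g1(1)] hom_mult[OF V f1(2) g1(2)] hom_mult[OF S Vc] Uc Sc
      by (simp add: G.m_ac)
  qed
qed

lemma tdiff_one_at:
  assumes c: "tensor_complexes R X dX Y dY" and f: "f \<in> carrier (dprod (tcomp R X Y n))"
    and "f (i + 1) = \<one>\<^bsub>tcomp R X Y n (i + 1)\<^esub>" "f i = \<one>\<^bsub>tcomp R X Y n i\<^esub>"
  shows "tdiff R X dX Y dY n f i = \<one>\<^bsub>tcomp R X Y (n - 1) i\<^esub>"
proof -
  let ?G = "tcomp R X Y (n - 1) i"
  interpret G: comm_group ?G by (rule comm_group_tcomp[OF c])
  have "tdiff_left R X dX Y n i (f (i + 1)) = \<one>\<^bsub>?G\<^esub>"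
    using assms(3) comm_group_hom_one[OF tdiff_left_hom[OF c] comm_group_tcomp[OF c] comm_group_tcomp[OF c]] by simp
  moreover have "tdiff_right R X Y dY n i (f i) = \<one>\<^bsub>?G\<^esub>"
    using assms(4) comm_group_hom_one[OF tdiff_right_hom[OF c] comm_group_tcomp[OF c] comm_group_tcomp[OF c]] by simp
  ultimately show ?thesis unfolding tdiff_eq_components koszul_sign_def by simp
qed

lemma tdiff_dsum:
  assumes c: "tensor_complexes R X dX Y dY" and f: "f \<in> dsum (tcomp R X Y n)"
  shows "tdiff R X dX Y dY n f \<in> dsum (tcomp R X Y (n - 1))"
proof -
  have fc: "f \<in> carrier (dprod (tcomp R X Y n))" and fin: "finite {i. f i \<noteq> \<one>\<^bsub>tcomp R X Y n i\<^esub>}"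
    using f by (auto simp: dsum_def)
  let ?A = "{i. f i \<noteq> \<one>\<^bsub>tcomp R X Y n i\<^esub>}"
  have "{i. tdiff R X dX Y dY n f i \<noteq> \<one>\<^bsub>tcomp R X Y (n - 1) i\<^esub>} \<subseteq> ?A \<union> (\<lambda>i. i - 1) ` ?A"
  proof
    fix i assume i: "i \<in> {i. tdiff R X dX Y dY n f i \<noteq> \<one>\<^bsub>tcomp R X Y (n - 1) i\<^esub>}"
    show "i \<in> ?A \<union> (\<lambda>i. i - 1) ` ?A"
    proof (rule ccontr)
      assume "i \<notin> ?A \<union> (\<lambda>i. i - 1) ` ?A"
      hence "f i = \<one>\<^bsub>tcomp R X Y n i\<^esub>" "f (i + 1) = \<one>\<^bsub>tcomp R X Y n (i + 1)\<^esub>"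
        by (auto simp: image_iff)
      then show False using i tdiff_one_at[OF c fc] by simp
    qed
  qed
  moreover have "finite (?A \<union> (\<lambda>i. i - 1) ` ?A)" using fin by simp
  ultimately show ?thesis using tdiff_in_carrier[OF c fc]
    by (auto simp: dsum_def intro: finite_subset)
qed

lemma premodule_Y: "tensor_complexes R X dX Y dY \<Longrightarrow> premodule (carrier R) (Y j)"
  and premodule_X: "tensor_complexes R X dX Y dY \<Longrightarrow> premodule (carrier R) (X i)"
  and premodule_trunc_Y: "tensor_complexes R X dX Y dY \<Longrightarrow> premodule (carrier R) (trunc Y m j)"
  by (auto simp: tensor_complexes_def intro: premodule_trunc)

lemma tincl_comp_hom:
  assumes c: "tensor_complexes R X dX Y dY" and mm: "m' \<le> m"
  shows "tensor_map R (X i) (trunc Y m (n - i)) (\<lambda>x. x) (\<lambda>y. y)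
     \<in> hom (tcomp R X (trunc Y m') n i) (tcomp R X (trunc Y m) n i)"
  unfolding tcomp_def
  by (rule tensor_map_hom[OF premodule_X[OF c] premodule_trunc_Y[OF c] premodule_X[OF c] premodule_trunc_Y[OF c] _
        premodule_hom_trunc_incl[OF premodule_Y[OF c] mm]]) (simp add: premodule_hom_def)

lemma tcomp_trunc_trivial:
  assumes c: "tensor_complexes R X dX Y dY" and "m < n - i"
  shows "carrier (tcomp R X (trunc Y m) n i) = {\<one>\<^bsub>tcomp R X (trunc Y m) n i\<^esub>}"
  by (rule tcomp_trivial[OF tensor_complexes_trunc[OF c]]) (use assms(2) in \<open>simp add: trunc_trivial\<close>)

lemma tcomp_trunc_in:
  assumes "n - i \<le> m" shows "tcomp R X (trunc Y m) n i = tcomp R X Y n i"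
  using assms by (simp add: tcomp_def)

lemma tincl_val:
  assumes c: "tensor_complexes R X dX Y dY" and mm: "m' \<le> m"
    and g: "g \<in> carrier (dprod (tcomp R X (trunc Y m') n))"
  shows "tincl R X (trunc Y m) n g i = (if n - i \<le> m' then g i else \<one>\<^bsub>tcomp R X (trunc Y m) n i\<^esub>)"
proof (cases "n - i \<le> m'")
  case True
  have "trunc Y m' (n - i) = Y (n - i)" "trunc Y m (n - i) = Y (n - i)" using True mm by simp_all
  moreover have "g i \<in> carrier (tcomp R X (trunc Y m') n i)" using g by simp
  ultimately have gi: "g i \<in> carrier (tensor_mod R (X i) (trunc Y m (n - i)))"
    by (simp add: tcomp_def)
  show ?thesis using True unfolding tincl_def
    by (simp add: tensor_map_id[OF premodule_X[OF c] premodule_trunc_Y[OF c] gi])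
next
  case False
  have "g i = \<one>\<^bsub>tcomp R X (trunc Y m') n i\<^esub>"
    using g tcomp_trunc_trivial[OF c, of m' n i] False by auto
  then show ?thesis using False unfolding tincl_def
    using comm_group_hom_one[OF tincl_comp_hom[OF c mm] comm_group_tcomp[OF tensor_complexes_trunc[OF c]] comm_group_tcomp[OF tensor_complexes_trunc[OF c]]]
    by simp
qed

lemma tincl_hom:
  assumes c: "tensor_complexes R X dX Y dY" and mm: "m' \<le> m"
  shows "tincl R X (trunc Y m) n \<in> hom (dprod (tcomp R X (trunc Y m') n)) (dprod (tcomp R X (trunc Y m) n))"
proof (rule homI)
  fix g assume g: "g \<in> carrier (dprod (tcomp R X (trunc Y m') n))"
  show "tincl R X (trunc Y m) n g \<in> carrier (dprod (tcomp R X (trunc Y m) n))"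
    unfolding tincl_def dprod_carrier by (intro allI hom_in_carrier[OF tincl_comp_hom[OF c mm]]) (use g in simp)
next
  fix g h assume g: "g \<in> carrier (dprod (tcomp R X (trunc Y m') n))" and h: "h \<in> carrier (dprod (tcomp R X (trunc Y m') n))"
  show "tincl R X (trunc Y m) n (g \<otimes>\<^bsub>dprod (tcomp R X (trunc Y m') n)\<^esub> h) =
         tincl R X (trunc Y m) n g \<otimes>\<^bsub>dprod (tcomp R X (trunc Y m) n)\<^esub> tincl R X (trunc Y m) n h"
  proof (rule ext)
    fix i
    have "g i \<in> carrier (tcomp R X (trunc Y m') n i)" "h i \<in> carrier (tcomp R X (trunc Y m') n i)" using g h by auto
    then show "tincl R X (trunc Y m) n (g \<otimes>\<^bsub>dprod (tcomp R X (trunc Y m') n)\<^esub> h) i =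
         (tincl R X (trunc Y m) n g \<otimes>\<^bsub>dprod (tcomp R X (trunc Y m) n)\<^esub> tincl R X (trunc Y m) n h) i"
      unfolding tincl_def dprod_mult by (rule hom_mult[OF tincl_comp_hom[OF c mm]])
  qed
qed

lemma tincl_dsum:
  assumes c: "tensor_complexes R X dX Y dY" and mm: "m' \<le> m"
    and g: "g \<in> dsum (tcomp R X (trunc Y m') n)"
  shows "tincl R X (trunc Y m) n g \<in> dsum (tcomp R X (trunc Y m) n)"
proof -
  have gc: "g \<in> carrier (dprod (tcomp R X (trunc Y m') n))" and fin: "finite {i. g i \<noteq> \<one>\<^bsub>tcomp R X (trunc Y m') n i\<^esub>}"
    using g by (auto simp: dsum_def)
  have "{i. tincl R X (trunc Y m) n g i \<noteq> \<one>\<^bsub>tcomp R X (trunc Y m) n i\<^esub>} \<subseteq> {i. g i \<noteq> \<one>\<^bsub>tcomp R X (trunc Y m') n i\<^esub>}"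
  proof
    fix i assume i: "i \<in> {i. tincl R X (trunc Y m) n g i \<noteq> \<one>\<^bsub>tcomp R X (trunc Y m) n i\<^esub>}"
    show "i \<in> {i. g i \<noteq> \<one>\<^bsub>tcomp R X (trunc Y m') n i\<^esub>}"
    proof (cases "n - i \<le> m'")
      case True
      then have "tcomp R X (trunc Y m') n i = tcomp R X (trunc Y m) n i" using mm by (simp add: tcomp_def)
      then show ?thesis using i True tincl_val[OF c mm gc, of i] by simp
    next
      case False
      then show ?thesis using i tincl_val[OF c mm gc, of i] by simp
    qed
  qed
  then show ?thesis using fin hom_in_carrier[OF tincl_hom[OF c mm] gc]
    by (auto simp: dsum_def intro: finite_subset)
qed

lemma tincl_inj:
  assumes c: "tensor_complexes R X dX Y dY" and mm: "m' \<le> m"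
    and g: "g \<in> carrier (dprod (tcomp R X (trunc Y m') n))" and h: "h \<in> carrier (dprod (tcomp R X (trunc Y m') n))"
    and e: "tincl R X (trunc Y m) n g = tincl R X (trunc Y m) n h"
  shows "g = h"
proof
  fix i
  have ee: "tincl R X (trunc Y m) n g i = tincl R X (trunc Y m) n h i" using e by simp
  show "g i = h i"
  proof (cases "n - i \<le> m'")
    case True then show ?thesis using ee tincl_val[OF c mm g, of i] tincl_val[OF c mm h, of i] by simp
  next
    case False
    have "g i \<in> carrier (tcomp R X (trunc Y m') n i)" "h i \<in> carrier (tcomp R X (trunc Y m') n i)"
      using g h by auto
    then show ?thesis using tcomp_trunc_trivial[OF c, of m' n i] False by simp
  qed
qed

lemma tincl_trans:
  assumes c: "tensor_complexes R X dX Y dY" and mm: "m' \<le> m" "m \<le> M"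
    and g: "g \<in> carrier (dprod (tcomp R X (trunc Y m') n))"
  shows "tincl R X (trunc Y M) n (tincl R X (trunc Y m) n g) = tincl R X (trunc Y M) n g"
proof
  fix i
  have g2: "tincl R X (trunc Y m) n g \<in> carrier (dprod (tcomp R X (trunc Y m) n))"
    using hom_in_carrier[OF tincl_hom[OF c mm(1)] g] .
  show "tincl R X (trunc Y M) n (tincl R X (trunc Y m) n g) i = tincl R X (trunc Y M) n g i"
    unfolding tincl_val[OF c mm(2) g2] tincl_val[OF c order.trans[OF mm] g] tincl_val[OF c mm(1) g]
    using mm by (simp add: tcomp_def)
qed

lemma tdiff_left_hom_trunc_trunc:
  assumes c: "tensor_complexes R X dX Y dY" and mm: "m \<le> M"
  shows "tdiff_left R X dX (trunc Y M) n i \<in> hom (tcomp R X (trunc Y m) n (i + 1)) (tcomp R X (trunc Y M) (n - 1) i)"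
  using c unfolding tensor_complexes_def
  by (intro tdiff_left_hom_gen) (auto intro: premodule_trunc premodule_hom_trunc_incl mm)

lemma tdiff_right_hom_trunc_trunc:
  assumes c: "tensor_complexes R X dX Y dY" and mm: "m \<le> M"
  shows "tdiff_right R X (trunc Y M) dY n i \<in> hom (tcomp R X (trunc Y m) n i) (tcomp R X (trunc Y M) (n - 1) i)"
proof -
  have c': "tensor_complexes R X dX (trunc Y M) dY" by (rule tensor_complexes_trunc[OF c])
  have e: "n - i - 1 = n - 1 - i" by simp
  have t: "premodule_hom (carrier R) (trunc Y M (n - i)) (trunc Y M (n - i - 1)) (dY (n - i))"
    using c' by (simp add: tensor_complexes_def)
  have sub: "carrier (trunc Y m (n - i)) \<subseteq> carrier (trunc Y M (n - i))"
    by (rule trunc_carrier_mono[OF premodule_Y[OF c] mm])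
  have "premodule_hom (carrier R) (trunc Y m (n - i)) (trunc Y M (n - 1 - i)) (dY (n - i))"
  proof (rule premodule_hom_restrict[OF t[unfolded e] sub])
    fix a assume "a \<in> carrier (trunc Y m (n - i))"
    then show "dY (n - i) a \<in> carrier (trunc Y M (n - 1 - i))" using t[unfolded e] sub by (auto simp: premodule_hom_def)
  qed (simp_all add: trunc_ops)
  then show ?thesis using c unfolding tensor_complexes_def
    by (intro tdiff_right_hom_gen) (auto intro: premodule_trunc)
qed

lemma tdiff_trunc_one_at:
  assumes c: "tensor_complexes R X dX Y dY" and mm: "m \<le> M"
    and h: "h \<in> carrier (dprod (tcomp R X (trunc Y m) n))"
    and "h (i + 1) = \<one>\<^bsub>tcomp R X (trunc Y m) n (i + 1)\<^esub>" "h i = \<one>\<^bsub>tcomp R X (trunc Y m) n i\<^esub>"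
  shows "tdiff R X dX (trunc Y M) dY n h i = \<one>\<^bsub>tcomp R X (trunc Y M) (n - 1) i\<^esub>"
proof -
  have c': "tensor_complexes R X dX (trunc Y M) dY" by (rule tensor_complexes_trunc[OF c])
  let ?G = "tcomp R X (trunc Y M) (n - 1) i"
  interpret G: comm_group ?G by (rule comm_group_tcomp[OF c'])
  have "tdiff_left R X dX (trunc Y M) n i (h (i + 1)) = \<one>\<^bsub>?G\<^esub>"
    using assms(4) comm_group_hom_one[OF tdiff_left_hom_trunc_trunc[OF c mm] comm_group_tcomp[OF tensor_complexes_trunc[OF c]] comm_group_tcomp[OF c']] by simp
  moreover have "tdiff_right R X (trunc Y M) dY n i (h i) = \<one>\<^bsub>?G\<^esub>"
    using assms(5) comm_group_hom_one[OF tdiff_right_hom_trunc_trunc[OF c mm] comm_group_tcomp[OF tensor_complexes_trunc[OF c]] comm_group_tcomp[OF c']] by simp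
  ultimately show ?thesis unfolding tdiff_eq_components koszul_sign_def by simp
qed

lemma tdiff_trunc_cong:
  assumes c: "tensor_complexes R X dX Y dY" and mm: "m \<le> M"
    and g: "g \<in> carrier (dprod (tcomp R X (trunc Y m) n))"
    and h: "h \<in> carrier (dprod (tcomp R X (trunc Y M) n))"
    and i: "n - 1 - i \<le> m"
    and e1: "h (i + 1) = g (i + 1)"
    and e2: "n - i \<le> m \<Longrightarrow> h i = g i"
    and e3: "m < n - i \<Longrightarrow> h i = \<one>\<^bsub>tcomp R X (trunc Y M) n i\<^esub>"
  shows "tdiff R X dX (trunc Y M) dY n h i = tdiff R X dX (trunc Y m) dY n g i"
proof -
  have c': "tensor_complexes R X dX (trunc Y M) dY" by (rule tensor_complexes_trunc[OF c])
  have tr: "trunc Y m (n - 1 - i) = trunc Y M (n - 1 - i)" using i mm by simp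
  have eU: "tdiff_left R X dX (trunc Y m) n i = tdiff_left R X dX (trunc Y M) n i" by (simp add: tdiff_left_def tr)
  have eV: "tdiff_right R X (trunc Y m) dY n i = tdiff_right R X (trunc Y M) dY n i" by (simp add: tdiff_right_def tr)
  have eG: "tcomp R X (trunc Y m) (n - 1) i = tcomp R X (trunc Y M) (n - 1) i"
    by (simp add: tcomp_def tr)
  have "tdiff_right R X (trunc Y M) dY n i (h i) = tdiff_right R X (trunc Y M) dY n i (g i)"
  proof (cases "n - i \<le> m")
    case True then show ?thesis using e2 by simp
  next
    case False
    have gi: "g i = \<one>\<^bsub>tcomp R X (trunc Y m) n i\<^esub>" using g tcomp_trunc_trivial[OF c, of m n i] False by auto
    show ?thesis using e3 False gi
      comm_group_hom_one[OF tdiff_right_hom_trunc_trunc[OF c mm] comm_group_tcomp[OF tensor_complexes_trunc[OF c]] comm_group_tcomp[OF c']]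
      comm_group_hom_one[OF tdiff_right_hom_trunc_trunc[OF c order.refl] comm_group_tcomp[OF tensor_complexes_trunc[OF c]] comm_group_tcomp[OF c']]
      by simp
  qed
  then show ?thesis unfolding tdiff_eq_components eU eV eG e1 by simp
qed

lemma tincl_chain_map:
  assumes c: "tensor_complexes R X dX Y dY" and mm: "m \<le> M"
    and g: "g \<in> carrier (dprod (tcomp R X (trunc Y m) n))"
  shows "tincl R X (trunc Y M) (n - 1) (tdiff R X dX (trunc Y m) dY n g)
       = tdiff R X dX (trunc Y M) dY n (tincl R X (trunc Y M) n g)"
proof
  fix i
  have cm: "tensor_complexes R X dX (trunc Y m) dY" by (rule tensor_complexes_trunc[OF c])
  have dg: "tdiff R X dX (trunc Y m) dY n g \<in> carrier (dprod (tcomp R X (trunc Y m) (n - 1)))"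
    using hom_in_carrier[OF tdiff_hom[OF cm] g] .
  have hc: "tincl R X (trunc Y M) n g \<in> carrier (dprod (tcomp R X (trunc Y M) n))"
    using hom_in_carrier[OF tincl_hom[OF c mm] g] .
  note tv = tincl_val[OF c mm g]
  show "tincl R X (trunc Y M) (n - 1) (tdiff R X dX (trunc Y m) dY n g) i
       = tdiff R X dX (trunc Y M) dY n (tincl R X (trunc Y M) n g) i"
  proof (cases "n - 1 - i \<le> m")
    case True
    have "tdiff R X dX (trunc Y M) dY n (tincl R X (trunc Y M) n g) i = tdiff R X dX (trunc Y m) dY n g i"
      by (rule tdiff_trunc_cong[OF c mm g hc True]) (use True in \<open>auto simp: tv\<close>)
    then show ?thesis using True by (simp add: tincl_val[OF c mm dg])
  next
    case False
    have "tdiff R X dX (trunc Y M) dY n (tincl R X (trunc Y M) n g) i = \<one>\<^bsub>tcomp R X (trunc Y M) (n - 1) i\<^esub>"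
      by (rule tdiff_trunc_one_at[OF c order.refl hc]) (use False in \<open>auto simp: tv\<close>)
    then show ?thesis using False by (simp add: tincl_val[OF c mm dg])
  qed
qed

lemma inv_dsum:
  assumes c: "tensor_complexes R X dX Y' dY" and g: "g \<in> dsum (tcomp R X Y' n)"
  shows "inv\<^bsub>(dprod (tcomp R X Y' n))\<lparr>carrier := dsum (tcomp R X Y' n)\<rparr>\<^esub> g = (\<lambda>i. inv\<^bsub>tcomp R X Y' n i\<^esub> (g i))"
proof -
  have cg: "\<And>i. comm_group (tcomp R X Y' n i)" by (rule comm_group_tcomp[OF c])
  have gp: "group (dprod (tcomp R X Y' n))" using comm_group_dprod[of "tcomp R X Y' n", OF cg] by (simp add: comm_group_def)
  have "inv\<^bsub>(dprod (tcomp R X Y' n))\<lparr>carrier := dsum (tcomp R X Y' n)\<rparr>\<^esub> g = inv\<^bsub>dprod (tcomp R X Y' n)\<^esub> g"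
    using group.m_inv_consistent[OF gp subgroup_dsum[OF cg] g] .
  also have "\<dots> = (\<lambda>i. inv\<^bsub>tcomp R X Y' n i\<^esub> (g i))" using g by (intro dprod_inv[OF cg]) (simp add: dsum_def)
  finally show ?thesis .
qed

lemma tdiff_trunc_eq:
  assumes "n - 1 - i \<le> m"
  shows "tdiff R X dX (trunc Y m) dY n g i = tdiff R X dX Y dY n g i"
  using assms by (simp add: tdiff_def tcomp_def)

section \<open>The unbounded tensor product as an inverse limit\<close>

locale tensor_bdd_above =
  fixes R :: "'r ring" and X :: "int \<Rightarrow> ('r, 'a) module" and dX :: "int \<Rightarrow> 'a \<Rightarrow> 'a"
    and Y :: "int \<Rightarrow> ('r, 'b) module" and dY :: "int \<Rightarrow> 'b \<Rightarrow> 'b" and k :: int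
  assumes cx: "tensor_complexes R X dX Y dY" and vanish: "vanishes_above Y k"

begin

abbreviation "tT n \<equiv> tcomp R X Y n"

abbreviation "tP n \<equiv> dprod (tT n)"

abbreviation "tS n \<equiv> (dprod (tT n))\<lparr>carrier := dsum (tT n)\<rparr>"

abbreviation "tD n \<equiv> tdiff R X dX Y dY n"

definition Filt :: "int \<Rightarrow> int \<Rightarrow> (int \<Rightarrow> ('a, 'b) tens) set" where
  "Filt m n = {f \<in> dsum (tT n). \<forall>i. m < n - i \<longrightarrow> f i = \<one>\<^bsub>tT n i\<^esub>}"

lemma comm_group_T: "comm_group (tT n i)" by (rule comm_group_tcomp[OF cx])

lemma T_trivial: "k < n - i \<Longrightarrow> carrier (tT n i) = {\<one>\<^bsub>tT n i\<^esub>}"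
  by (rule tcomp_trivial[OF cx]) (use vanish in \<open>simp add: vanishes_above_def\<close>)

lemma comm_group_P: "comm_group (tP n)" by (rule comm_group_dprod[OF comm_group_T])

lemma subgroup_dsum_P: "subgroup (dsum (tT n)) (tP n)" by (rule subgroup_dsum[OF comm_group_T])

lemma comm_group_S: "comm_group (tS n)" by (rule comm_group_restrict[OF comm_group_P subgroup_dsum_P])

lemma group_S: "group (tS n)" using comm_group_S by (simp add: comm_group_def)

lemma group_P: "group (tP n)" using comm_group_P by (simp add: comm_group_def)

lemma inv_P: "f \<in> carrier (tP n) \<Longrightarrow> inv\<^bsub>tP n\<^esub> f = (\<lambda>i. inv\<^bsub>tT n i\<^esub> (f i))"
  by (rule dprod_inv[OF comm_group_T])

lemma inv_S: "f \<in> dsum (tT n) \<Longrightarrow> inv\<^bsub>tS n\<^esub> f = (\<lambda>i. inv\<^bsub>tT n i\<^esub> (f i))"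
proof -
  assume f: "f \<in> dsum (tT n)"
  have "inv\<^bsub>tS n\<^esub> f = inv\<^bsub>tP n\<^esub> f" using group.m_inv_consistent[OF group_P subgroup_dsum_P f] .
  also have "\<dots> = (\<lambda>i. inv\<^bsub>tT n i\<^esub> (f i))" using f by (intro inv_P) (simp add: dsum_def)
  finally show ?thesis .
qed

lemma dsum_carrier: "f \<in> dsum (tT n) \<Longrightarrow> f i \<in> carrier (tT n i)"
  by (simp add: dsum_def)

lemma subgroup_Filt_P: "subgroup (Filt m n) (tP n)"
  unfolding Filt_def by (rule subgroup_dsum_vanishing[OF comm_group_T])

lemma Filt_subset_dsum: "Filt m n \<subseteq> dsum (tT n)" by (auto simp: Filt_def)

lemma subgroup_Filt: "subgroup (Filt m n) (tS n)"
  by (rule group.subgroup_incl[OF group_P subgroup_Filt_P subgroup_dsum_P Filt_subset_dsum])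

lemma normal_Filt: "Filt m n \<lhd> tS n"
  by (rule comm_group.subgroup_imp_normal[OF comm_group_S subgroup_Filt])

lemma Filt_mono: "m \<le> m' \<Longrightarrow> Filt m n \<subseteq> Filt m' n"
  by (auto simp: Filt_def)

lemma Filt_rcos_eq_iff:
  assumes a: "a \<in> dsum (tT n)" and b: "b \<in> dsum (tT n)"
  shows "Filt m n #>\<^bsub>tS n\<^esub> a = Filt m n #>\<^bsub>tS n\<^esub> b \<longleftrightarrow> (\<forall>i. m < n - i \<longrightarrow> a i = b i)"
proof -
  interpret S: comm_group "tS n" by (rule comm_group_S)
  interpret L: subgroup "Filt m n" "tS n" by (rule subgroup_Filt)
  have ac: "a \<in> carrier (tS n)" "b \<in> carrier (tS n)" using a b by simp_all
  have ab: "a \<otimes>\<^bsub>tS n\<^esub> inv\<^bsub>tS n\<^esub> b = (\<lambda>i. a i \<otimes>\<^bsub>tT n i\<^esub> inv\<^bsub>tT n i\<^esub> (b i))"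
    using b by (simp add: inv_S)
  have abc: "a \<otimes>\<^bsub>tS n\<^esub> inv\<^bsub>tS n\<^esub> b \<in> dsum (tT n)" using S.m_closed[OF ac(1) S.inv_closed[OF ac(2)]] by simp
  have pt: "a i \<otimes>\<^bsub>tT n i\<^esub> inv\<^bsub>tT n i\<^esub> (b i) = \<one>\<^bsub>tT n i\<^esub> \<longleftrightarrow> a i = b i" for i
  proof -
    interpret Ti: comm_group "tT n i" by (rule comm_group_T)
    show ?thesis using dsum_carrier[OF a, of i] dsum_carrier[OF b, of i]
      by (simp add: Ti.inv_solve_right')
  qed
  have "Filt m n #>\<^bsub>tS n\<^esub> a = Filt m n #>\<^bsub>tS n\<^esub> b \<longleftrightarrow> a \<otimes>\<^bsub>tS n\<^esub> inv\<^bsub>tS n\<^esub> b \<in> Filt m n"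
  proof
    assume "Filt m n #>\<^bsub>tS n\<^esub> a = Filt m n #>\<^bsub>tS n\<^esub> b"
    then have "a \<in> Filt m n #>\<^bsub>tS n\<^esub> b" using S.rcos_self[OF ac(1) L.subgroup_axioms] by simp
    then show "a \<otimes>\<^bsub>tS n\<^esub> inv\<^bsub>tS n\<^esub> b \<in> Filt m n" using L.rcos_module_imp[OF S.is_group ac(2)] by blast
  next
    assume "a \<otimes>\<^bsub>tS n\<^esub> inv\<^bsub>tS n\<^esub> b \<in> Filt m n"
    then have "a \<in> Filt m n #>\<^bsub>tS n\<^esub> b" using L.rcos_module_rev[OF S.is_group ac(2) ac(1)] by blast
    then show "Filt m n #>\<^bsub>tS n\<^esub> a = Filt m n #>\<^bsub>tS n\<^esub> b"
      using S.repr_independence[OF _ ac(2) L.subgroup_axioms] by simp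
  qed
  also have "\<dots> \<longleftrightarrow> (\<forall>i. m < n - i \<longrightarrow> a i = b i)"
    using abc unfolding Filt_def ab by (simp add: pt)
  finally show ?thesis .
qed

lemma trunc_sup: "trunc Y k = Y" by (rule trunc_top[OF vanish order.refl])

lemma tsub_eq_Filt:
  assumes mk: "m \<le> k"
  shows "tsub R X Y m n = Filt m n"
proof -
  have e: "tsub R X Y m n = tincl R X (trunc Y k) n ` dsum (tcomp R X (trunc Y m) n)"
    by (simp add: tsub_def tsum_carrier_eq_dsum trunc_sup)
  show ?thesis unfolding e
  proof
    show "tincl R X (trunc Y k) n ` dsum (tcomp R X (trunc Y m) n) \<subseteq> Filt m n"
    proof
      fix f assume "f \<in> tincl R X (trunc Y k) n ` dsum (tcomp R X (trunc Y m) n)"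
      then obtain g where g: "g \<in> dsum (tcomp R X (trunc Y m) n)" "f = tincl R X (trunc Y k) n g" by blast
      have gc: "g \<in> carrier (dprod (tcomp R X (trunc Y m) n))" using g by (simp add: dsum_def)
      have "f \<in> dsum (tT n)" using tincl_dsum[OF cx mk g(1)] g(2) by (simp add: trunc_sup)
      moreover have "\<forall>i. m < n - i \<longrightarrow> f i = \<one>\<^bsub>tT n i\<^esub>"
        using g(2) tincl_val[OF cx mk gc] by (simp add: trunc_sup)
      ultimately show "f \<in> Filt m n" by (simp add: Filt_def)
    qed
  next
    show "Filt m n \<subseteq> tincl R X (trunc Y k) n ` dsum (tcomp R X (trunc Y m) n)"
    proof
      fix f assume f: "f \<in> Filt m n"
      define g where "g = (\<lambda>i. if n - i \<le> m then f i else \<one>\<^bsub>tcomp R X (trunc Y m) n i\<^esub>)"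
      have fs: "f \<in> dsum (tT n)" using f by (simp add: Filt_def)
      have gs: "g \<in> dsum (tcomp R X (trunc Y m) n)"
      proof (rule dsumI)
        show "g i \<in> carrier (tcomp R X (trunc Y m) n i)" for i
        proof (cases "n - i \<le> m")
          case True then show ?thesis using dsum_carrier[OF fs, of i] by (simp add: g_def tcomp_def)
        next
          case False
          interpret Ti: comm_group "tcomp R X (trunc Y m) n i" by (rule comm_group_tcomp[OF tensor_complexes_trunc[OF cx]])
          show ?thesis using False by (simp add: g_def)
        qed
        show "finite {i. f i \<noteq> \<one>\<^bsub>tT n i\<^esub>}" using fs by (simp add: dsum_def)
        show "i \<in> {i. f i \<noteq> \<one>\<^bsub>tT n i\<^esub>}" if "g i \<noteq> \<one>\<^bsub>tcomp R X (trunc Y m) n i\<^esub>" for i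
          using that by (auto simp: g_def tcomp_def split: if_splits)
      qed
      then have gc: "g \<in> carrier (dprod (tcomp R X (trunc Y m) n))" by (simp add: dsum_def)
      have "tincl R X (trunc Y k) n g = f"
      proof
        fix i show "tincl R X (trunc Y k) n g i = f i"
          using f tincl_val[OF cx mk gc, of i] by (auto simp: g_def Filt_def trunc_sup)
      qed
      then show "f \<in> tincl R X (trunc Y k) n ` dsum (tcomp R X (trunc Y m) n)" using gs by blast
    qed
  qed
qed

lemma tsum_eq_S: "tsum R X Y n = tS n" by (simp add: tsum_eq_dsum)

lemma tprod_eq_P: "tprod R X Y n = tP n" by (simp add: tprod_eq_dprod)

lemma D_hom_P: "tD n \<in> hom (tP n) (tP (n - 1))" by (rule tdiff_hom[OF cx])

lemma D_hom_S: "tD n \<in> hom (tS n) (tS (n - 1))"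
proof (rule hom_restrict_carrier[OF D_hom_P])
  show "dsum (tT n) \<subseteq> carrier (tP n)" by (auto simp: dsum_def)
  show "tD n ` dsum (tT n) \<subseteq> dsum (tT (n - 1))" using tdiff_dsum[OF cx] by blast
qed

lemma D_Filt: "tD n ` Filt m n \<subseteq> Filt m (n - 1)"
proof
  fix y assume "y \<in> tD n ` Filt m n"
  then obtain h where h: "h \<in> Filt m n" "y = tD n h" by blast
  have hs: "h \<in> dsum (tT n)" and hc: "h \<in> carrier (tP n)" using h by (auto simp: Filt_def dsum_def)
  have "y \<in> dsum (tT (n - 1))" using h tdiff_dsum[OF cx hs] by simp
  moreover have "y i = \<one>\<^bsub>tT (n - 1) i\<^esub>" if "m < n - 1 - i" for i
    using h that tdiff_one_at[OF cx hc, of i] by (auto simp: Filt_def)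
  ultimately show "y \<in> Filt m (n - 1)" by (simp add: Filt_def)
qed

lemma tdiff_cong:
  "f (i + 1) = g (i + 1) \<Longrightarrow> f i = g i \<Longrightarrow> tdiff R X dX Y' dY n f i = tdiff R X dX Y' dY n g i"
  by (simp add: tdiff_def)

definition cut :: "nat \<Rightarrow> int \<Rightarrow> (int \<Rightarrow> ('a, 'b) tens) \<Rightarrow> (int \<Rightarrow> ('a, 'b) tens)" where
  "cut u n f = (\<lambda>i. if i < n - k + int u then f i else \<one>\<^bsub>tT n i\<^esub>)"

definition lim_map :: "int \<Rightarrow> (int \<Rightarrow> ('a, 'b) tens) \<Rightarrow> nat \<Rightarrow> (int \<Rightarrow> ('a, 'b) tens) set" where
  "lim_map n f = (\<lambda>u. Filt (k - int u) n #>\<^bsub>tS n\<^esub> cut u n f)"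

abbreviation "tQ u n \<equiv> tS n Mod Filt (k - int u) n"

lemma qsys_eq_Q: "qsys R X Y k u n = tQ u n"
  by (simp add: qsys_def quot_grp_def tsum_eq_S tsub_eq_Filt)

lemma group_Q: "group (tQ u n)" by (rule normal.factorgroup_is_group[OF normal_Filt])

lemma comm_group_Q: "comm_group (tQ u n)" by (rule comm_group.abelian_FactGroup[OF comm_group_S subgroup_Filt])

lemma P_low_vanish: "f \<in> carrier (tP n) \<Longrightarrow> i < n - k \<Longrightarrow> f i = \<one>\<^bsub>tT n i\<^esub>"
  using T_trivial[of n i] by auto

lemma cut_dsum:
  assumes f: "f \<in> carrier (tP n)" shows "cut u n f \<in> dsum (tT n)"
proof -
  interpret P: comm_group "tP n" by (rule comm_group_P)
  have "cut u n f \<in> carrier (tP n)" using f by (auto simp: cut_def intro: monoid.one_closed comm_group.axioms comm_group_T group.is_monoid)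
  moreover have "{i. cut u n f i \<noteq> \<one>\<^bsub>tT n i\<^esub>} \<subseteq> {n - k..<n - k + int u}"
    using P_low_vanish[OF f] by (auto simp: cut_def split: if_splits)
  ultimately show ?thesis by (auto simp: dsum_def intro: finite_subset)
qed

lemma cut_hom: "cut u n \<in> hom (tP n) (tS n)"
proof (rule homI)
  fix f assume "f \<in> carrier (tP n)" then show "cut u n f \<in> carrier (tS n)" using cut_dsum by simp
next
  fix f g assume "f \<in> carrier (tP n)" "g \<in> carrier (tP n)"
  have o: "\<one>\<^bsub>tT n i\<^esub> \<otimes>\<^bsub>tT n i\<^esub> \<one>\<^bsub>tT n i\<^esub> = \<one>\<^bsub>tT n i\<^esub>" for i
  proof -
    interpret Ti: comm_group "tT n i" by (rule comm_group_T)
    show ?thesis by simp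
  qed
  show "cut u n (f \<otimes>\<^bsub>tP n\<^esub> g) = cut u n f \<otimes>\<^bsub>tS n\<^esub> cut u n g"
    by (rule ext) (simp add: cut_def o)
qed

lemma qsys_nu_rcos:
  assumes a: "a \<in> dsum (tT n)"
  shows "qsys_nu R X Y k u n (Filt (k - int (Suc u)) n #>\<^bsub>tS n\<^esub> a) = Filt (k - int u) n #>\<^bsub>tS n\<^esub> a"
proof -
  have sub: "(\<lambda>x. x) ` Filt (k - int (Suc u)) n \<subseteq> Filt (k - int u) n" using Filt_mono[of "k - int (Suc u)" "k - int u"] by auto
  have "(\<lambda>x. x) \<in> hom (tS n) (tS n)" by (rule homI) auto
  from FactGroup_induced_rcos[OF normal_Filt normal_Filt this sub, of a] a
  show ?thesis by (simp add: qsys_nu_def tsub_eq_Filt tsum_eq_S)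
qed

lemma qsys_nu_hom: "qsys_nu R X Y k u n \<in> hom (tQ (Suc u) n) (tQ u n)"
proof -
  have sub: "(\<lambda>x. x) ` Filt (k - int (Suc u)) n \<subseteq> Filt (k - int u) n" using Filt_mono[of "k - int (Suc u)" "k - int u"] by auto
  have "(\<lambda>x. x) \<in> hom (tS n) (tS n)" by (rule homI) auto
  note q = FactGroup_induced_hom[OF normal_Filt normal_Filt this sub]
  have e: "qsys_nu R X Y k u n = (\<lambda>S. Filt (k - int u) n #>\<^bsub>tS n\<^esub> (SOME x. x \<in> S))"
    by (simp add: qsys_nu_def tsub_eq_Filt tsum_eq_S fun_eq_iff)
  show ?thesis unfolding e by (rule q)
qed

abbreviation "tL n \<equiv> lim_grp (qsys R X Y k) (qsys_nu R X Y k) n"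

abbreviation "tF n \<equiv> dprod (\<lambda>u. qsys R X Y k u n)"

lemma one_minus_nu_hom_Q: "one_minus_nu (qsys R X Y k) (qsys_nu R X Y k) n \<in> hom (tF n) (tF n)"
proof (rule one_minus_nu_hom)
  show "\<And>u. comm_group (qsys R X Y k u n)" by (simp add: qsys_eq_Q comm_group_Q)
  show "\<And>u. qsys_nu R X Y k u n \<in> hom (qsys R X Y k (Suc u) n) (qsys R X Y k u n)"
    unfolding qsys_eq_Q by (rule qsys_nu_hom)
qed

lemma comm_group_F: "comm_group (tF n)" by (rule comm_group_dprod) (simp add: qsys_eq_Q comm_group_Q)

lemma L_eq_kernel: "tL n = (tF n)\<lparr>carrier := kernel (tF n) (tF n) (one_minus_nu (qsys R X Y k) (qsys_nu R X Y k) n)\<rparr>"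
  by (rule lim_grp_eq_kernel)

lemma group_L: "group (tL n)"
  unfolding L_eq_kernel
  by (rule subgroup.subgroup_is_group[OF subgroup_kernel_comm_group[OF comm_group_F comm_group_F one_minus_nu_hom_Q]])
     (use comm_group_F in \<open>simp add: comm_group_def\<close>)

lemma cut_Suc: "k - int u < n - i \<Longrightarrow> cut (Suc u) n f i = cut u n f i"
  by (simp add: cut_def)

lemma lim_map_in_carrier:
  assumes f: "f \<in> carrier (tP n)" shows "lim_map n f \<in> carrier (tL n)"
proof -
  have inQ: "lim_map n f u \<in> carrier (tQ u n)" for u
    using cut_dsum[OF f] by (auto simp: lim_map_def carrier_FactGroup)
  have nu: "qsys_nu R X Y k u n (lim_map n f (Suc u)) = lim_map n f u" for u
  proof -
    have "qsys_nu R X Y k u n (lim_map n f (Suc u)) = Filt (k - int u) n #>\<^bsub>tS n\<^esub> cut (Suc u) n f"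
      unfolding lim_map_def by (rule qsys_nu_rcos[OF cut_dsum[OF f]])
    also have "\<dots> = lim_map n f u" unfolding lim_map_def
      using Filt_rcos_eq_iff[OF cut_dsum[OF f] cut_dsum[OF f]] cut_Suc by blast
    finally show ?thesis .
  qed
  have "one_minus_nu (qsys R X Y k) (qsys_nu R X Y k) n (lim_map n f) = \<one>\<^bsub>tF n\<^esub>"
  proof (rule ext)
    fix u
    interpret Q: group "tQ u n" by (rule group_Q)
    show "one_minus_nu (qsys R X Y k) (qsys_nu R X Y k) n (lim_map n f) u = \<one>\<^bsub>tF n\<^esub> u"
      unfolding one_minus_nu_def dprod_one qsys_eq_Q nu by (rule Q.r_inv[OF inQ])
  qed
  then show ?thesis unfolding L_eq_kernel kernel_def using inQ by (simp add: qsys_eq_Q)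
qed

lemma lim_map_hom: "lim_map n \<in> hom (tP n) (tL n)"
proof (rule homI)
  fix f assume "f \<in> carrier (tP n)" then show "lim_map n f \<in> carrier (tL n)" by (rule lim_map_in_carrier)
next
  fix f g assume f: "f \<in> carrier (tP n)" and g: "g \<in> carrier (tP n)"
  show "lim_map n (f \<otimes>\<^bsub>tP n\<^esub> g) = lim_map n f \<otimes>\<^bsub>tL n\<^esub> lim_map n g"
  proof (rule ext)
    fix u
    interpret N: normal "Filt (k - int u) n" "tS n" by (rule normal_Filt)
    have m: "cut u n (f \<otimes>\<^bsub>tP n\<^esub> g) = cut u n f \<otimes>\<^bsub>tS n\<^esub> cut u n g" using f g by (rule hom_mult[OF cut_hom])
    have rs: "(Filt (k - int u) n #>\<^bsub>tS n\<^esub> cut u n f) <#>\<^bsub>tS n\<^esub> (Filt (k - int u) n #>\<^bsub>tS n\<^esub> cut u n g)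
      = Filt (k - int u) n #>\<^bsub>tS n\<^esub> (cut u n f \<otimes>\<^bsub>tS n\<^esub> cut u n g)"
      by (rule N.rcos_sum) (use cut_dsum[OF f] cut_dsum[OF g] in simp_all)
    show "lim_map n (f \<otimes>\<^bsub>tP n\<^esub> g) u = (lim_map n f \<otimes>\<^bsub>tL n\<^esub> lim_map n g) u"
      unfolding lim_map_def L_eq_kernel dprod_mult qsys_eq_Q mult_FactGroup using rs m by simp
  qed
qed

lemma lim_map_kernel:
  assumes f: "f \<in> carrier (tP n)" and e: "lim_map n f = \<one>\<^bsub>tL n\<^esub>"
  shows "f = \<one>\<^bsub>tP n\<^esub>"
proof (rule ext)
  fix i
  define u where "u = nat (i - (n - k)) + 1"
  have iu: "i < n - k + int u" by (simp add: u_def)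
  have c1: "Filt (k - int u) n #>\<^bsub>tS n\<^esub> \<one>\<^bsub>tS n\<^esub> = Filt (k - int u) n"
    by (rule group.coset_mult_one[OF group_S subgroup.subset[OF subgroup_Filt]])
  have "Filt (k - int u) n #>\<^bsub>tS n\<^esub> cut u n f = Filt (k - int u) n #>\<^bsub>tS n\<^esub> \<one>\<^bsub>tS n\<^esub>"
    using e fun_cong[OF e, of u] c1 unfolding lim_map_def L_eq_kernel
    by (simp add: qsys_eq_Q)
  then have "\<forall>i. k - int u < n - i \<longrightarrow> cut u n f i = \<one>\<^bsub>tT n i\<^esub>"
    using Filt_rcos_eq_iff[OF cut_dsum[OF f], of "\<one>\<^bsub>tS n\<^esub>"] subgroup.one_closed[OF subgroup_dsum_P] by simp
  then show "f i = \<one>\<^bsub>tP n\<^esub> i" using iu by (simp add: cut_def)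
qed

lemma lim_compatible_reps:
  assumes x: "x \<in> carrier (tL n)"
  obtains r where "\<And>u. r u \<in> dsum (tT n)" "\<And>u. x u = Filt (k - int u) n #>\<^bsub>tS n\<^esub> r u"
    and "\<And>u i. i < n - k + int u \<Longrightarrow> r (Suc u) i = r u i"
proof
  have xu: "x u \<in> carrier (tQ u n)" for u using x by (simp add: L_eq_kernel kernel_def qsys_eq_Q)
  have xk: "one_minus_nu (qsys R X Y k) (qsys_nu R X Y k) n x = \<one>\<^bsub>tF n\<^esub>"
    using x by (simp add: L_eq_kernel kernel_def)
  define r where "r u = (SOME y. y \<in> x u)" for u
  have r: "r u \<in> dsum (tT n) \<and> x u = Filt (k - int u) n #>\<^bsub>tS n\<^esub> r u" for u
  proof -
    obtain a where a: "a \<in> dsum (tT n)" "x u = Filt (k - int u) n #>\<^bsub>tS n\<^esub> a"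
      using xu[of u] by (auto simp: carrier_FactGroup)
    have "a \<in> x u" using a group.rcos_self[OF group_S _ subgroup_Filt] by simp
    then have ru: "r u \<in> x u" unfolding r_def by (rule someI[of "\<lambda>y. y \<in> x u"])
    then have rf: "r u \<in> dsum (tT n)"
      using a subgroup.elemrcos_carrier[OF subgroup_Filt group_S] by simp
    have "Filt (k - int u) n #>\<^bsub>tS n\<^esub> a = Filt (k - int u) n #>\<^bsub>tS n\<^esub> r u"
      using group.repr_independence[OF group_S _ _ subgroup_Filt] ru a by simp
    then show ?thesis using rf a by simp
  qed
  then show "r u \<in> dsum (tT n)" "x u = Filt (k - int u) n #>\<^bsub>tS n\<^esub> r u" for u
    by simp_all
  fix u i assume i: "i < n - k + int u"
  interpret Q: group "tQ u n" by (rule group_Q)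
  have nuc: "qsys_nu R X Y k u n (x (Suc u)) \<in> carrier (tQ u n)"
    using hom_in_carrier[OF qsys_nu_hom xu] .
  have "x u \<otimes>\<^bsub>tQ u n\<^esub> inv\<^bsub>tQ u n\<^esub> qsys_nu R X Y k u n (x (Suc u)) = \<one>\<^bsub>tQ u n\<^esub>"
    using fun_cong[OF xk, of u] by (simp add: one_minus_nu_def qsys_eq_Q)
  then have "x u = qsys_nu R X Y k u n (x (Suc u))"
    using Q.inv_solve_right'[OF Q.one_closed xu[of u] nuc] Q.l_one[OF nuc] by simp
  also have "\<dots> = Filt (k - int u) n #>\<^bsub>tS n\<^esub> r (Suc u)"
    using r[of "Suc u"] qsys_nu_rcos[of "r (Suc u)" n u] by simp
  finally show "r (Suc u) i = r u i"
    using r[of u] Filt_rcos_eq_iff[OF conjunct1[OF r[of u]] conjunct1[OF r[of "Suc u"]]] i by auto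
qed

lemma lim_map_surj:
  assumes x: "x \<in> carrier (tL n)"
  shows "x \<in> lim_map n ` carrier (tP n)"
proof -
  obtain r where r: "\<And>u. r u \<in> dsum (tT n)" "\<And>u. x u = Filt (k - int u) n #>\<^bsub>tS n\<^esub> r u"
    and step: "\<And>u i. i < n - k + int u \<Longrightarrow> r (Suc u) i = r u i"
    using lim_compatible_reps[OF x] by blast
  have agree: "r (u + d) i = r u i" if "i < n - k + int u" for u d i
    by (induction d) (use step that in auto)
  \<comment> \<open>the \<open>i\<close>-th component is read off from the first stage at which it is visible\<close>
  define f where "f i = r (nat (i - (n - k)) + 1) i" for i
  have fc: "f \<in> carrier (tP n)" using r by (simp add: f_def dsum_carrier)
  have "lim_map n f u = x u" for u
  proof -
    have "cut u n f i = r u i" if i: "k - int u < n - i" for i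
    proof (cases "i < n - k")
      case True
      then show ?thesis using i P_low_vanish[OF fc True] T_trivial[of n i] dsum_carrier[OF r(1), of u i]
        by (simp add: cut_def)
    next
      case False
      define w where "w = nat (i - (n - k)) + 1"
      have "w \<le> u" and wi: "i < n - k + int w" using i False by (simp_all add: w_def)
      then have "r u i = r w i" using agree[OF wi, of "u - w"] by simp
      then show ?thesis using i by (simp add: cut_def f_def w_def)
    qed
    then have "Filt (k - int u) n #>\<^bsub>tS n\<^esub> cut u n f = Filt (k - int u) n #>\<^bsub>tS n\<^esub> r u"
      using Filt_rcos_eq_iff[OF cut_dsum[OF fc] r(1)] by simp
    then show ?thesis using r(2)[of u] by (simp add: lim_map_def)
  qed
  then show ?thesis using fc by blast
qed

lemma lim_map_iso: "lim_map n \<in> iso (tP n) (tL n)"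
proof -
  interpret group_hom "tP n" "tL n" "lim_map n"
    using group_P group_L lim_map_hom by (simp add: group_hom_def group_hom_axioms_def)
  show ?thesis
    unfolding iso_iff using lim_map_kernel lim_map_surj by blast
qed

lemma lim_map_chain:
  assumes f: "f \<in> carrier (tP n)"
  shows "lim_map (n - 1) (tD n f) = sys_prod_diff (qsys_diff R X dX Y dY k) n (lim_map n f)"
proof (rule ext)
  fix u
  have Df: "tD n f \<in> carrier (tP (n - 1))" using hom_in_carrier[OF D_hom_P f] .
  have a: "cut u n f \<in> carrier (tS n)" using cut_dsum[OF f] by simp
  have "sys_prod_diff (qsys_diff R X dX Y dY k) n (lim_map n f) u
      = Filt (k - int u) (n - 1) #>\<^bsub>tS (n - 1)\<^esub> tD n (SOME x. x \<in> Filt (k - int u) n #>\<^bsub>tS n\<^esub> cut u n f)"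
    by (simp add: sys_prod_diff_def qsys_diff_def quot_diff_def lim_map_def tsum_eq_S tsub_eq_Filt)
  also have "\<dots> = Filt (k - int u) (n - 1) #>\<^bsub>tS (n - 1)\<^esub> tD n (cut u n f)"
    by (rule FactGroup_induced_rcos[OF normal_Filt normal_Filt D_hom_S D_Filt a])
  also have "\<dots> = Filt (k - int u) (n - 1) #>\<^bsub>tS (n - 1)\<^esub> cut u (n - 1) (tD n f)"
  proof -
    have "\<forall>i. k - int u < n - 1 - i \<longrightarrow> tD n (cut u n f) i = cut u (n - 1) (tD n f) i"
      by (auto simp: cut_def intro!: tdiff_cong)
    then show ?thesis
      using Filt_rcos_eq_iff[OF hom_in_carrier[OF D_hom_S a, simplified] cut_dsum[OF Df]] by simp
  qed
  finally show "lim_map (n - 1) (tD n f) u = sys_prod_diff (qsys_diff R X dX Y dY k) n (lim_map n f) u"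
    by (simp add: lim_map_def)
qed

theorem tprod_iso_lim: "cx_iso (tprod R X Y) (tdiff R X dX Y dY)
           (lim_grp (qsys R X Y k) (qsys_nu R X Y k))
           (sys_prod_diff (qsys_diff R X dX Y dY k))"
  unfolding cx_iso_def
  by (rule exI[of _ lim_map]) (use lim_map_iso lim_map_chain in \<open>simp add: tprod_eq_P\<close>)

end

section \<open>The stable tensor product as a derived limit\<close>

declare of_nat_Suc [simp del]

context tensor_bdd_above begin

abbreviation "tTu u n \<equiv> tcomp R X (trunc Y (k - int u)) n"

abbreviation "tW u n \<equiv> (dprod (tTu u n))\<lparr>carrier := dsum (tTu u n)\<rparr>"

abbreviation "tSP n \<equiv> dprod (\<lambda>u. tW u n)"

abbreviation "tnu u n \<equiv> tincl R X (trunc Y (k - int u)) n"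

abbreviation "tE n \<equiv> tincl R X (trunc Y k) n"

abbreviation "tDu u n \<equiv> tdiff R X dX (trunc Y (k - int u)) dY n"

lemma tensor_complexes_trunc_Y: "tensor_complexes R X dX (trunc Y m) dY" by (rule tensor_complexes_trunc[OF cx])

lemma tsys_eq_W: "tsys R X Y k u n = tW u n" by (simp add: tsys_def tsum_eq_dsum)

lemma tsys_nu_eq_incl: "tsys_nu R X Y k u n = tnu u n" by (simp add: tsys_nu_def)

lemma tsys_diff_eq_tdiff: "tsys_diff R X dX Y dY k u n = tDu u n" by (simp add: tsys_diff_def)

lemma sys_prod_tsys_eq: "sys_prod (tsys R X Y k) n = tSP n" by (simp add: sys_prod_eq_dprod tsys_eq_W)

lemma comm_group_Tu: "comm_group (tTu u n i)" by (rule comm_group_tcomp[OF tensor_complexes_trunc_Y])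

lemma comm_group_dprod_Tu: "comm_group (dprod (tTu u n))" by (rule comm_group_dprod[OF comm_group_Tu])

lemma subgroup_dsum_Tu: "subgroup (dsum (tTu u n)) (dprod (tTu u n))" by (rule subgroup_dsum[OF comm_group_Tu])

lemma comm_group_W: "comm_group (tW u n)" by (rule comm_group_restrict[OF comm_group_dprod_Tu subgroup_dsum_Tu])

lemma comm_group_SP: "comm_group (tSP n)" by (rule comm_group_dprod[OF comm_group_W])

lemma group_SP: "group (tSP n)" using comm_group_SP by (simp add: comm_group_def)

lemma inv_W: "g \<in> dsum (tTu u n) \<Longrightarrow> inv\<^bsub>tW u n\<^esub> g = (\<lambda>i. inv\<^bsub>tTu u n i\<^esub> (g i))"
  by (rule inv_dsum[OF tensor_complexes_trunc_Y])

lemma inv_SP: "x \<in> carrier (tSP n) \<Longrightarrow> inv\<^bsub>tSP n\<^esub> x = (\<lambda>u. inv\<^bsub>tW u n\<^esub> (x u))"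
  by (rule dprod_inv[OF comm_group_W])

lemma Tu_eq_T: "n - i \<le> k - int u \<Longrightarrow> tTu u n i = tT n i"
  by (rule tcomp_trunc_in)

lemma Tu_trivial: "k - int u < n - i \<Longrightarrow> carrier (tTu u n i) = {\<one>\<^bsub>tTu u n i\<^esub>}"
  by (rule tcomp_trunc_trivial[OF cx])

lemma W_carrier_comp: "g \<in> dsum (tTu u n) \<Longrightarrow> g i \<in> carrier (tTu u n i)"
  by (simp add: dsum_def)

lemma nu_eq:
  assumes "g \<in> carrier (dprod (tTu (Suc u) n))"
  shows "tnu u n g i = (if n - i \<le> k - int (Suc u) then g i else \<one>\<^bsub>tTu u n i\<^esub>)"
  by (rule tincl_val[OF cx _ assms]) (simp add: of_nat_Suc)

lemma nu_hom: "tnu u n \<in> hom (tW (Suc u) n) (tW u n)"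
proof (rule hom_restrict_carrier)
  show "tnu u n \<in> hom (dprod (tTu (Suc u) n)) (dprod (tTu u n))" by (rule tincl_hom[OF cx]) simp
  show "dsum (tTu (Suc u) n) \<subseteq> carrier (dprod (tTu (Suc u) n))" by (auto simp: dsum_def)
  have le: "k - int (Suc u) \<le> k - int u" by (simp add: of_nat_Suc)
  show "tnu u n ` dsum (tTu (Suc u) n) \<subseteq> dsum (tTu u n)" using tincl_dsum[OF cx le] by blast
qed

abbreviation "one_nu n \<equiv> one_minus_nu (tsys R X Y k) (tsys_nu R X Y k) n"

lemma one_nu_hom: "one_nu n \<in> hom (tSP n) (tSP n)"
proof -
  have "one_nu n \<in> hom (dprod (\<lambda>u. tsys R X Y k u n)) (dprod (\<lambda>u. tsys R X Y k u n))"
  proof (rule one_minus_nu_hom)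
    show "\<And>u. comm_group (tsys R X Y k u n)" by (simp add: tsys_eq_W comm_group_W)
    show "\<And>u. tsys_nu R X Y k u n \<in> hom (tsys R X Y k (Suc u) n) (tsys R X Y k u n)"
      unfolding tsys_eq_W tsys_nu_eq_incl by (rule nu_hom)
  qed
  then show ?thesis by (simp add: tsys_eq_W)
qed

lemma one_nu_comp:
  assumes x: "x \<in> carrier (tSP n)"
  shows "one_nu n x u i = x u i \<otimes>\<^bsub>tTu u n i\<^esub>
    inv\<^bsub>tTu u n i\<^esub> (if n - k + int u < i then x (Suc u) i else \<one>\<^bsub>tTu u n i\<^esub>)"
proof -
  have xs: "x (Suc u) \<in> carrier (dprod (tTu (Suc u) n))" using x by (simp add: dsum_def)
  have cond: "n - i \<le> k - int (Suc u) \<longleftrightarrow> n - k + int u < i" unfolding of_nat_Suc by linarith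
  have "tnu u n (x (Suc u)) \<in> dsum (tTu u n)" using hom_in_carrier[OF nu_hom, of "x (Suc u)"] x by simp
  then show ?thesis using nu_eq[OF xs, of i] unfolding cond
    by (simp add: one_minus_nu_def tsys_eq_W tsys_nu_eq_incl inv_W)
qed

lemma SP_comp_low:
  assumes "x \<in> carrier (tSP n)" "y \<in> carrier (tSP n)" "i < n - k + int u"
  shows "x u i = y u i"
  using Tu_trivial[of u n i] W_carrier_comp[of "x u" u n i] W_carrier_comp[of "y u" u n i] assms by simp

lemma SP_diff_comp:
  assumes "x \<in> carrier (tSP n)" "y \<in> carrier (tSP n)"
  shows "(x \<otimes>\<^bsub>tSP n\<^esub> inv\<^bsub>tSP n\<^esub> y) u i = x u i \<otimes>\<^bsub>tTu u n i\<^esub> inv\<^bsub>tTu u n i\<^esub> (y u i)"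
  using assms by (simp add: inv_SP inv_W)

definition Bd :: "int \<Rightarrow> (nat \<Rightarrow> int \<Rightarrow> ('a, 'b) tens) set" where
  "Bd n = one_nu n ` carrier (tSP n)"

lemma subgroup_Bd: "subgroup (Bd n) (tSP n)"
  unfolding Bd_def
  by (rule group_hom.img_is_subgroup) (simp add: group_hom_def group_hom_axioms_def group_SP one_nu_hom)

lemma normal_Bd: "Bd n \<lhd> tSP n" by (rule comm_group.subgroup_imp_normal[OF comm_group_SP subgroup_Bd])

lemma normal_dsum_P: "dsum (tT n) \<lhd> tP n" by (rule comm_group.subgroup_imp_normal[OF comm_group_P subgroup_dsum_P])

lemma one_Tu: "\<one>\<^bsub>tTu u n i\<^esub> \<in> carrier (tTu u n i)"
  using comm_group_Tu by (simp add: comm_group_def group.is_monoid monoid.one_closed)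

text \<open>\<open>diag n f\<close> places \<open>f_{n-k+u}\<close> into the \<open>u\<close>-th stage \<open>X \<otimes> Y_{\<le>k-u}\<close>, at the lowest
  index where that stage can be non-zero; \<open>tail n u g\<close> is the part of \<open>g\<close> that survives there.\<close>



definition diag :: "int \<Rightarrow> (int \<Rightarrow> ('a, 'b) tens) \<Rightarrow> nat \<Rightarrow> int \<Rightarrow> ('a, 'b) tens" where
  "diag n f = (\<lambda>u i. if i = n - k + int u then f i else \<one>\<^bsub>tTu u n i\<^esub>)"

definition tail :: "int \<Rightarrow> nat \<Rightarrow> (int \<Rightarrow> ('a, 'b) tens) \<Rightarrow> int \<Rightarrow> ('a, 'b) tens" where
  "tail n u g = (\<lambda>i. if n - k + int u \<le> i then g i else \<one>\<^bsub>tTu u n i\<^esub>)"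

lemma diag_dsum:
  assumes f: "f \<in> carrier (tP n)" shows "diag n f u \<in> dsum (tTu u n)"
proof (rule dsumI[where A="{n - k + int u}"])
  show "diag n f u i \<in> carrier (tTu u n i)" for i
    using f Tu_eq_T[of n i u] one_Tu by (auto simp: diag_def)
qed (simp_all add: diag_def split: if_splits)

lemma tail_dsum:
  assumes g: "g \<in> dsum (tT n)" shows "tail n u g \<in> dsum (tTu u n)"
proof (rule dsumI)
  show "tail n u g i \<in> carrier (tTu u n i)" for i
    using dsum_carrier[OF g, of i] Tu_eq_T[of n i u] one_Tu by (auto simp: tail_def)
  show "finite {i. g i \<noteq> \<one>\<^bsub>tT n i\<^esub>}" using g by (simp add: dsum_def)
  show "i \<in> {i. g i \<noteq> \<one>\<^bsub>tT n i\<^esub>}" if "tail n u g i \<noteq> \<one>\<^bsub>tTu u n i\<^esub>" for i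
    using that Tu_eq_T[of n i u] by (auto simp: tail_def split: if_splits)
qed

lemma diag_hom: "diag n \<in> hom (tP n) (tSP n)"
proof (rule homI)
  fix f assume "f \<in> carrier (tP n)" then show "diag n f \<in> carrier (tSP n)" using diag_dsum by simp
next
  fix f g assume f: "f \<in> carrier (tP n)" and g: "g \<in> carrier (tP n)"
  have o: "\<one>\<^bsub>tTu u n i\<^esub> \<otimes>\<^bsub>tTu u n i\<^esub> \<one>\<^bsub>tTu u n i\<^esub> = \<one>\<^bsub>tTu u n i\<^esub>" for u i
  proof -
    interpret Ti: comm_group "tTu u n i" by (rule comm_group_Tu)
    show ?thesis by simp
  qed
  have t: "tTu u n (n - k + int u) = tT n (n - k + int u)" for u by (rule Tu_eq_T) simp
  show "diag n (f \<otimes>\<^bsub>tP n\<^esub> g) = diag n f \<otimes>\<^bsub>tSP n\<^esub> diag n g"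
    by (intro ext) (simp add: diag_def o t)
qed

lemma one_nu_tail:
  assumes f: "f \<in> dsum (tT n)"
  shows "one_nu n (\<lambda>u. tail n u f) = diag n f"
proof (intro ext)
  fix u i
  have zc: "(\<lambda>u. tail n u f) \<in> carrier (tSP n)" using tail_dsum[OF f] by simp
  interpret Ti: comm_group "tTu u n i" by (rule comm_group_Tu)
  have fc: "f i \<in> carrier (tTu u n i)" if "n - k + int u \<le> i"
    using dsum_carrier[OF f, of i] Tu_eq_T[of n i u] that by simp
  consider "i < n - k + int u" | "n - k + int u = i" | "n - k + int u < i" by linarith
  then show "one_nu n (\<lambda>u. tail n u f) u i = diag n f u i"
  proof cases
    case 1
    then have "\<not> n - k + int u \<le> i" "\<not> n - k + int u < i" "i \<noteq> n - k + int u" by linarith+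
    then show ?thesis unfolding one_nu_comp[OF zc] by (simp add: tail_def diag_def)
  next
    case 2
    then show ?thesis using fc unfolding one_nu_comp[OF zc] by (simp add: tail_def diag_def)
  next
    case 3
    then have "n - k + int (Suc u) \<le> i" by (simp add: of_nat_Suc)
    then show ?thesis using 3 fc unfolding one_nu_comp[OF zc] by (simp add: tail_def diag_def)
  qed
qed

lemma diag_dsum_Bd: "diag n ` dsum (tT n) \<subseteq> Bd n"
proof
  fix y assume "y \<in> diag n ` dsum (tT n)"
  then obtain f where f: "f \<in> dsum (tT n)" and y: "y = diag n f" by blast
  have "(\<lambda>u. tail n u f) \<in> carrier (tSP n)" using tail_dsum[OF f] by simp
  then show "y \<in> Bd n" unfolding Bd_def y one_nu_tail[OF f, symmetric] by (rule imageI)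
qed

lemma diag_Bd_dsum:
  assumes f: "f \<in> carrier (tP n)" and im: "diag n f \<in> Bd n"
  shows "f \<in> dsum (tT n)"
proof -
  obtain z where zc: "z \<in> carrier (tSP n)" and ez: "one_nu n z = diag n f" using im by (auto simp: Bd_def)
  have zin: "z u \<in> dsum (tTu u n)" for u using zc by simp
  \<comment> \<open>descending from stage \<open>v\<close> to stage \<open>0\<close>, \<open>(1 - \<nu>) z = diag n f\<close> forces \<open>z\<^sub>0\<close> to agree with \<open>f\<close>\<close>
  have "f i = z 0 i" for i
  proof (cases "i < n - k")
    case True
    then show ?thesis using P_low_vanish[OF f True] T_trivial[of n i] W_carrier_comp[OF zin[of 0], of i]
      by (simp add: trunc_sup)
  next
    case False
    define v where "v = nat (i - (n - k))"
    have iv: "i = n - k + int v" using False by (simp add: v_def)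
    have "z (v - w) i = f i" if "w \<le> v" for w
      using that
    proof (induction w)
      case 0
      interpret Ti: comm_group "tTu v n i" by (rule comm_group_Tu)
      show ?case using fun_cong[OF fun_cong[OF ez, of v], of i] W_carrier_comp[OF zin, of v i]
        by (simp add: one_nu_comp[OF zc] diag_def iv[symmetric])
    next
      case (Suc w)
      define u where "u = v - Suc w"
      have uv: "Suc u = v - w" "u < v" using Suc.prems by (simp_all add: u_def)
      interpret Ti: comm_group "tTu u n i" by (rule comm_group_Tu)
      have t: "tTu (Suc u) n i = tTu u n i" using uv iv Tu_eq_T[of n i u] Tu_eq_T[of n i "Suc u"] by simp
      have "z u i \<otimes>\<^bsub>tTu u n i\<^esub> inv\<^bsub>tTu u n i\<^esub> (z (Suc u) i) = \<one>\<^bsub>tTu u n i\<^esub>"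
        using fun_cong[OF fun_cong[OF ez, of u], of i] iv uv by (simp add: one_nu_comp[OF zc] diag_def)
      then have "z u i = z (Suc u) i"
        using W_carrier_comp[OF zin, of u i] W_carrier_comp[OF zin, of "Suc u" i] t
        by (simp add: Ti.inv_solve_right')
      then show ?case using Suc uv by (simp add: u_def)
    qed
    from this[of v] show ?thesis by simp
  qed
  then have "f = z 0" by (rule ext)
  with zin[of 0] show ?thesis by (simp add: trunc_sup)
qed

definition psum :: "int \<Rightarrow> (nat \<Rightarrow> int \<Rightarrow> ('a, 'b) tens) \<Rightarrow> nat \<Rightarrow> int \<Rightarrow> ('a, 'b) tens" where
  "psum n y = rec_nat \<one>\<^bsub>tS n\<^esub> (\<lambda>u a. a \<otimes>\<^bsub>tS n\<^esub> tE n (y u))"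

lemma psum_dsum_Suc:
  assumes y: "y \<in> carrier (tSP n)"
  shows "psum n y u \<in> dsum (tT n)"
    and "psum n y (Suc u) i
      = psum n y u i \<otimes>\<^bsub>tT n i\<^esub> (if n - i \<le> k - int u then y u i else \<one>\<^bsub>tT n i\<^esub>)"
proof -
  interpret S: comm_group "tS n" by (rule comm_group_S)
  have yin: "y u \<in> dsum (tTu u n)" for u using y by simp
  have le: "k - int u \<le> k" for u by simp
  have emb: "tE n (y u) \<in> dsum (tT n)" for u using tincl_dsum[OF cx le yin[of u]] by (simp add: trunc_sup)
  show "psum n y u \<in> dsum (tT n)"
    by (induction u) (use emb S.m_closed S.one_closed in \<open>simp_all add: psum_def\<close>)
  show "psum n y (Suc u) i
      = psum n y u i \<otimes>\<^bsub>tT n i\<^esub> (if n - i \<le> k - int u then y u i else \<one>\<^bsub>tT n i\<^esub>)"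
    using tincl_val[OF cx le[of u], where g="y u" and n=n and i=i] yin[of u]
    by (simp add: psum_def dsum_def trunc_sup)
qed

lemma diag_surj_mod_Bd:
  assumes y: "y \<in> carrier (tSP n)"
  shows "\<exists>f\<in>carrier (tP n). y \<otimes>\<^bsub>tSP n\<^esub> inv\<^bsub>tSP n\<^esub> (diag n f) \<in> Bd n"
proof -
  note psum = psum_dsum_Suc[OF y]
  define f where "f i = psum n y (nat (i - (n - k)) + 1) i" for i
  define z where "z u = tail n u (inv\<^bsub>tS n\<^esub> (psum n y u))" for u
  have fc: "f \<in> carrier (tP n)" using psum(1) by (simp add: f_def dsum_carrier)
  have inv_psum: "inv\<^bsub>tS n\<^esub> (psum n y u) \<in> dsum (tT n)" for u
  proof -
    interpret S: comm_group "tS n" by (rule comm_group_S)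
    show ?thesis using S.inv_closed[of "psum n y u"] psum(1) by simp
  qed
  have zc: "z \<in> carrier (tSP n)" using tail_dsum[OF inv_psum] by (simp add: z_def)
  have xfc: "diag n f \<in> carrier (tSP n)" using diag_dsum[OF fc] by simp
  have "(y \<otimes>\<^bsub>tSP n\<^esub> inv\<^bsub>tSP n\<^esub> (diag n f)) u i = one_nu n z u i" for u i
  proof -
    interpret Tu: comm_group "tTu u n i" by (rule comm_group_Tu)
    interpret Ti: comm_group "tT n i" by (rule comm_group_T)
    have yc: "y u i \<in> carrier (tTu u n i)" using W_carrier_comp y by simp
    have a: "psum n y u i \<in> carrier (tT n i)" using dsum_carrier[OF psum(1)] .
    have zv: "z u i = (if n - k + int u \<le> i then inv\<^bsub>tT n i\<^esub> (psum n y u i) else \<one>\<^bsub>tTu u n i\<^esub>)"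
      for u using psum(1) by (simp add: z_def tail_def inv_S)
    consider "i < n - k + int u" | "n - k + int u = i" | "n - k + int u < i" by linarith
    then show ?thesis
    proof cases
      case 1
      interpret SP: group "tSP n" by (rule group_SP)
      have "y \<otimes>\<^bsub>tSP n\<^esub> inv\<^bsub>tSP n\<^esub> diag n f \<in> carrier (tSP n)"
        by (rule SP.m_closed[OF y SP.inv_closed[OF xfc]])
      then show ?thesis using SP_comp_low[OF _ hom_in_carrier[OF one_nu_hom zc] 1] by blast
    next
      case 2
      have t: "tTu u n i = tT n i" using 2 by (intro Tu_eq_T) linarith
      have "nat (i - (n - k)) + 1 = Suc u" "n - i \<le> k - int u" using 2 by linarith+
      then have "f i = psum n y u i \<otimes>\<^bsub>tT n i\<^esub> y u i" by (simp add: f_def psum(2))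
      then show ?thesis using 2 a yc t unfolding SP_diff_comp[OF y xfc] one_nu_comp[OF zc]
        by (simp add: zv diag_def Ti.inv_mult Ti.m_lcomm[of "y u i" "inv\<^bsub>tT n i\<^esub> psum n y u i" "inv\<^bsub>tT n i\<^esub> y u i"])
    next
      case 3
      have t: "tTu u n i = tT n i" using 3 by (intro Tu_eq_T) linarith
      have "n - i \<le> k - int u" "n - k + int (Suc u) \<le> i" "i \<noteq> n - k + int u"
        using 3 by (simp_all add: of_nat_Suc)
      moreover have "inv\<^bsub>tT n i\<^esub> (psum n y u i) \<otimes>\<^bsub>tT n i\<^esub> (psum n y u i \<otimes>\<^bsub>tT n i\<^esub> y u i) = y u i"
        using a yc t by (simp add: Ti.m_assoc[symmetric])
      ultimately show ?thesis using 3 a yc t unfolding SP_diff_comp[OF y xfc] one_nu_comp[OF zc]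
        by (simp add: zv diag_def psum(2))
    qed
  qed
  then have "y \<otimes>\<^bsub>tSP n\<^esub> inv\<^bsub>tSP n\<^esub> (diag n f) = one_nu n z" by (intro ext)
  then show ?thesis using fc zc unfolding Bd_def by blast
qed

definition lim1_map :: "int \<Rightarrow> (int \<Rightarrow> ('a, 'b) tens) set \<Rightarrow> (nat \<Rightarrow> int \<Rightarrow> ('a, 'b) tens) set" where
  "lim1_map n = (\<lambda>S. Bd n #>\<^bsub>tSP n\<^esub> diag n (SOME x. x \<in> S))"

lemma lim1_map_iso: "lim1_map n \<in> iso (tP n Mod dsum (tT n)) (tSP n Mod Bd n)"
  unfolding lim1_map_def
  by (rule FactGroup_induced_iso[OF normal_dsum_P normal_Bd diag_hom diag_dsum_Bd diag_Bd_dsum diag_surj_mod_Bd])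

lemma lim1_map_rcos: "f \<in> carrier (tP n) \<Longrightarrow> lim1_map n (dsum (tT n) #>\<^bsub>tP n\<^esub> f) = Bd n #>\<^bsub>tSP n\<^esub> diag n f"
  unfolding lim1_map_def
  by (rule FactGroup_induced_rcos[OF normal_dsum_P normal_Bd diag_hom diag_dsum_Bd])

lemma Du_hom: "tDu u n \<in> hom (tW u n) (tW u (n - 1))"
proof (rule hom_restrict_carrier[OF tdiff_hom[OF tensor_complexes_trunc_Y]])
  show "dsum (tTu u n) \<subseteq> carrier (dprod (tTu u n))" by (auto simp: dsum_def)
  show "tDu u n ` dsum (tTu u n) \<subseteq> dsum (tTu u (n - 1))" using tdiff_dsum[OF tensor_complexes_trunc_Y] by blast
qed

abbreviation "DS n \<equiv> sys_prod_diff (tsys_diff R X dX Y dY k) n"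

lemma DS_eq: "DS n x u = tDu u n (x u)"
  by (simp add: sys_prod_diff_def tsys_diff_eq_tdiff)

lemma DS_hom: "DS n \<in> hom (tSP n) (tSP (n - 1))"
proof (rule homI)
  fix x assume "x \<in> carrier (tSP n)"
  then show "DS n x \<in> carrier (tSP (n - 1))"
    using hom_in_carrier[OF Du_hom] by (simp add: DS_eq)
next
  fix x y assume x: "x \<in> carrier (tSP n)" and y: "y \<in> carrier (tSP n)"
  show "DS n (x \<otimes>\<^bsub>tSP n\<^esub> y) = DS n x \<otimes>\<^bsub>tSP (n - 1)\<^esub> DS n y"
  proof (rule ext)
    fix u
    have "tDu u n (x u \<otimes>\<^bsub>tW u n\<^esub> y u) = tDu u n (x u) \<otimes>\<^bsub>tW u (n - 1)\<^esub> tDu u n (y u)"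
      by (rule hom_mult[OF Du_hom]) (use x y in simp_all)
    then show "DS n (x \<otimes>\<^bsub>tSP n\<^esub> y) u = (DS n x \<otimes>\<^bsub>tSP (n - 1)\<^esub> DS n y) u"
      by (simp add: DS_eq)
  qed
qed

lemma Du_nu_commute:
  assumes g: "g \<in> dsum (tTu (Suc u) n)"
  shows "tDu u n (tnu u n g) = tnu u (n - 1) (tDu (Suc u) n g)"
proof -
  have l1: "k - int (Suc u) \<le> k - int u" by (simp add: of_nat_Suc)
  have l2: "k - int u \<le> k" by simp
  have l3: "k - int (Suc u) \<le> k" by (simp add: of_nat_Suc)
  have gc: "g \<in> carrier (dprod (tTu (Suc u) n))" using g by (simp add: dsum_def)
  have ng: "tnu u n g \<in> carrier (dprod (tTu u n))" using hom_in_carrier[OF tincl_hom[OF cx l1] gc] .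
  have A: "tDu u n (tnu u n g) \<in> carrier (dprod (tTu u (n - 1)))"
    using hom_in_carrier[OF tdiff_hom[OF tensor_complexes_trunc_Y] ng] .
  have dg: "tDu (Suc u) n g \<in> carrier (dprod (tTu (Suc u) (n - 1)))"
    using hom_in_carrier[OF tdiff_hom[OF tensor_complexes_trunc_Y] gc] .
  have B: "tnu u (n - 1) (tDu (Suc u) n g) \<in> carrier (dprod (tTu u (n - 1)))"
    using hom_in_carrier[OF tincl_hom[OF cx l1] dg] .
  have "tE (n - 1) (tDu u n (tnu u n g)) = tdiff R X dX (trunc Y k) dY n (tE n (tnu u n g))"
    by (rule tincl_chain_map[OF cx l2 ng])
  also have "\<dots> = tdiff R X dX (trunc Y k) dY n (tE n g)"
    by (simp add: tincl_trans[OF cx l1 l2 gc])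
  also have "\<dots> = tE (n - 1) (tDu (Suc u) n g)"
    by (rule tincl_chain_map[OF cx l3 gc, symmetric])
  also have "\<dots> = tE (n - 1) (tnu u (n - 1) (tDu (Suc u) n g))"
    by (rule tincl_trans[OF cx l1 l2 dg, symmetric])
  finally show ?thesis by (rule tincl_inj[OF cx l2 A B])
qed

lemma DS_Bd: "DS n ` Bd n \<subseteq> Bd (n - 1)"
proof
  fix w assume "w \<in> DS n ` Bd n"
  then obtain z where zc: "z \<in> carrier (tSP n)" and w: "w = DS n (one_nu n z)" by (auto simp: Bd_def)
  have zin: "z u \<in> dsum (tTu u n)" for u using zc by simp
  have Dz: "DS n z \<in> carrier (tSP (n - 1))" using hom_in_carrier[OF DS_hom zc] .
  have "DS n (one_nu n z) = one_nu (n - 1) (DS n z)"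
  proof (rule ext)
    fix u
    interpret Wu: comm_group "tW u n" by (rule comm_group_W)
    interpret Wu1: comm_group "tW u (n - 1)" by (rule comm_group_W)
    interpret gh: group_hom "tW u n" "tW u (n - 1)" "tDu u n"
      using Du_hom by (simp add: group_hom_def group_hom_axioms_def Wu.is_group Wu1.is_group)
    have nc: "tnu u n (z (Suc u)) \<in> carrier (tW u n)" by (rule hom_in_carrier[OF nu_hom]) (use zin in simp)
    have "DS n (one_nu n z) u = tDu u n (z u \<otimes>\<^bsub>tW u n\<^esub> inv\<^bsub>tW u n\<^esub> tnu u n (z (Suc u)))"
      by (simp add: DS_eq one_minus_nu_def tsys_eq_W tsys_nu_eq_incl)
    also have "\<dots> = tDu u n (z u) \<otimes>\<^bsub>tW u (n - 1)\<^esub> inv\<^bsub>tW u (n - 1)\<^esub> tDu u n (tnu u n (z (Suc u)))"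
    proof -
      have zu: "z u \<in> carrier (tW u n)" using zin by simp
      have e1: "tDu u n (z u \<otimes>\<^bsub>tW u n\<^esub> inv\<^bsub>tW u n\<^esub> tnu u n (z (Suc u)))
          = tDu u n (z u) \<otimes>\<^bsub>tW u (n - 1)\<^esub> tDu u n (inv\<^bsub>tW u n\<^esub> tnu u n (z (Suc u)))"
        by (rule gh.hom_mult[OF zu Wu.inv_closed[OF nc]])
      have e2: "tDu u n (inv\<^bsub>tW u n\<^esub> tnu u n (z (Suc u))) = inv\<^bsub>tW u (n - 1)\<^esub> tDu u n (tnu u n (z (Suc u)))"
        by (rule gh.hom_inv[OF nc])
      show ?thesis by (simp only: e1 e2)
    qed
    also have "\<dots> = tDu u n (z u) \<otimes>\<^bsub>tW u (n - 1)\<^esub> inv\<^bsub>tW u (n - 1)\<^esub> tnu u (n - 1) (tDu (Suc u) n (z (Suc u)))"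
      by (simp add: Du_nu_commute[OF zin])
    also have "\<dots> = one_nu (n - 1) (DS n z) u"
      by (simp add: DS_eq one_minus_nu_def tsys_eq_W tsys_nu_eq_incl)
    finally show "DS n (one_nu n z) u = one_nu (n - 1) (DS n z) u" .
  qed
  then show "w \<in> Bd (n - 1)" using w Dz by (auto simp: Bd_def)
qed

lemma DS_diag_comp:
  assumes f: "f \<in> carrier (tP n)" and i: "n - 1 - i \<le> k - int u"
  shows "DS n (diag n f) u i =
    (if i + 1 = n - k + int u then tdiff_left R X dX Y n i (f (i + 1)) else \<one>\<^bsub>tT (n - 1) i\<^esub>)
    \<otimes>\<^bsub>tT (n - 1) i\<^esub> (if i = n - k + int u
      then koszul_sign (tT (n - 1) i) i (tdiff_right R X Y dY n i (f i)) else \<one>\<^bsub>tT (n - 1) i\<^esub>)"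
proof -
  interpret Ti: comm_group "tT (n - 1) i" by (rule comm_group_T)
  have U: "tdiff_left R X dX Y n i \<in> hom (tTu u n (i + 1)) (tT (n - 1) i)"
    by (rule tdiff_left_hom_trunc[OF cx])
  have V: "tdiff_right R X Y dY n i \<in> hom (tTu u n i) (tT (n - 1) i)"
    by (rule tdiff_right_hom_trunc[OF cx])
  have "tdiff_left R X dX Y n i (diag n f u (i + 1))
      = (if i + 1 = n - k + int u then tdiff_left R X dX Y n i (f (i + 1)) else \<one>\<^bsub>tT (n - 1) i\<^esub>)"
    using comm_group_hom_one[OF U comm_group_Tu comm_group_T] by (simp add: diag_def)
  moreover have "tdiff_right R X Y dY n i (diag n f u i)
      = (if i = n - k + int u then tdiff_right R X Y dY n i (f i) else \<one>\<^bsub>tT (n - 1) i\<^esub>)"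
    using comm_group_hom_one[OF V comm_group_Tu comm_group_T] by (simp add: diag_def)
  ultimately show ?thesis
    unfolding DS_eq unfolding tdiff_trunc_eq[OF i] unfolding tdiff_eq_components
    using koszul_sign_one[OF Ti.is_group] by simp
qed

lemma diag_chain_mod_Bd:
  assumes f: "f \<in> carrier (tP n)"
  shows "DS n (diag n f) \<otimes>\<^bsub>tSP (n - 1)\<^esub> inv\<^bsub>tSP (n - 1)\<^esub> (diag (n - 1) (tD n f)) \<in> Bd (n - 1)"
proof -
  define a where "a j = koszul_sign (tT (n - 1) j) j (tdiff_right R X Y dY n j (f j))" for j
  have ac: "a j \<in> carrier (tT (n - 1) j)" "inv\<^bsub>tT (n - 1) j\<^esub> (a j) \<in> carrier (tT (n - 1) j)" for j
  proof -
    interpret Tj: comm_group "tT (n - 1) j" by (rule comm_group_T)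
    show "a j \<in> carrier (tT (n - 1) j)" unfolding a_def
      by (rule hom_in_carrier[OF koszul_sign_hom[OF comm_group_T] hom_in_carrier[OF tdiff_right_hom[OF cx]]])
        (use f in simp)
    then show "inv\<^bsub>tT (n - 1) j\<^esub> (a j) \<in> carrier (tT (n - 1) j)" by simp
  qed
  \<comment> \<open>the defect is the term \<open>\<plusminus>x \<otimes> \<partial>y\<close>, which \<open>1 - \<nu>\<close> moves from stage \<open>u + 1\<close> to stage \<open>u\<close>\<close>
  define z where "z = diag (n - 1) (\<lambda>j. inv\<^bsub>tT (n - 1) j\<^esub> (a j))"
  have zc: "z \<in> carrier (tSP (n - 1))"
    unfolding z_def by (rule hom_in_carrier[OF diag_hom]) (use ac in simp)
  have Df: "tD n f \<in> carrier (tP (n - 1))" using hom_in_carrier[OF D_hom_P f] .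
  have Dx1: "DS n (diag n f) \<in> carrier (tSP (n - 1))" using hom_in_carrier[OF DS_hom hom_in_carrier[OF diag_hom f]] .
  have x2: "diag (n - 1) (tD n f) \<in> carrier (tSP (n - 1))" using hom_in_carrier[OF diag_hom Df] .
  have "(DS n (diag n f) \<otimes>\<^bsub>tSP (n - 1)\<^esub> inv\<^bsub>tSP (n - 1)\<^esub> (diag (n - 1) (tD n f))) u i = one_nu (n - 1) z u i"
    for u i
  proof (cases "n - 1 - i \<le> k - int u")
    case False
    interpret SP: group "tSP (n - 1)" by (rule group_SP)
    have "DS n (diag n f) \<otimes>\<^bsub>tSP (n - 1)\<^esub> inv\<^bsub>tSP (n - 1)\<^esub> (diag (n - 1) (tD n f)) \<in> carrier (tSP (n - 1))"
      by (rule SP.m_closed[OF Dx1 SP.inv_closed[OF x2]])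
    then show ?thesis using SP_comp_low[OF _ hom_in_carrier[OF one_nu_hom zc]] False by simp
  next
    case True
    have t: "tTu u (n - 1) i = tT (n - 1) i" using True by (rule Tu_eq_T)
    interpret Ti: comm_group "tT (n - 1) i" by (rule comm_group_T)
    have Uc: "tdiff_left R X dX Y n i (f (i + 1)) \<in> carrier (tT (n - 1) i)"
      by (rule hom_in_carrier[OF tdiff_left_hom[OF cx]]) (use f in simp)
    have Dfi: "tD n f i = tdiff_left R X dX Y n i (f (i + 1)) \<otimes>\<^bsub>tT (n - 1) i\<^esub> a i"
      by (simp add: tdiff_eq_components a_def)
    note eqs = SP_diff_comp[OF Dx1 x2] DS_diag_comp[OF f True] one_nu_comp[OF zc]
    consider "n - 1 - k + int u = i" | "n - k + int u = i" | "n - k + int u < i" using True by linarith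
    then show ?thesis
    proof cases
      case 1
      then have "i + 1 = n - k + int u" "i \<noteq> n - k + int u" by linarith+
      then show ?thesis using 1 Uc ac[of i] unfolding eqs
        by (simp add: z_def diag_def t Dfi Ti.inv_mult Ti.m_assoc[symmetric])
    next
      case 2
      then have "i + 1 \<noteq> i" "n - 1 - k + int u \<noteq> i" "n - 1 - k + int (Suc u) = i" "n - 1 - k + int u < i"
        by (simp_all add: of_nat_Suc)
      then show ?thesis using 2 ac[of i] unfolding eqs by (simp add: z_def diag_def t a_def)
    next
      case 3
      then have "i + 1 \<noteq> n - k + int u" "i \<noteq> n - k + int u" "n - 1 - k + int u \<noteq> i"
          "n - 1 - k + int (Suc u) \<noteq> i" "n - 1 - k + int u < i"
        by (simp_all add: of_nat_Suc)
      moreover have "tTu (Suc u) (n - 1) i = tT (n - 1) i"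
        using 3 by (intro Tu_eq_T) (simp add: of_nat_Suc)
      ultimately show ?thesis unfolding eqs by (simp add: z_def diag_def t)
    qed
  qed
  then have "DS n (diag n f) \<otimes>\<^bsub>tSP (n - 1)\<^esub> inv\<^bsub>tSP (n - 1)\<^esub> (diag (n - 1) (tD n f)) = one_nu (n - 1) z"
    by (intro ext)
  then show ?thesis using zc by (auto simp: Bd_def)
qed

lemma D_dsum: "tD n ` dsum (tT n) \<subseteq> dsum (tT (n - 1))" using tdiff_dsum[OF cx] by blast

lemma lim1_map_chain:
  assumes x: "x \<in> carrier (tP n Mod dsum (tT n))"
  shows "lim1_map (n - 1) (quot_diff (tprod R X Y) (tdiff R X dX Y dY) (tsum_carrier R X Y) n x)
       = lim1_diff (tsys R X Y k) (tsys_nu R X Y k) (tsys_diff R X dX Y dY k) n (lim1_map n x)"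
proof -
  obtain f where fc: "f \<in> carrier (tP n)" and diag: "x = dsum (tT n) #>\<^bsub>tP n\<^esub> f"
    using x by (auto simp: carrier_FactGroup)
  have Df: "tD n f \<in> carrier (tP (n - 1))" using hom_in_carrier[OF D_hom_P fc] .
  have x1: "diag n f \<in> carrier (tSP n)" using hom_in_carrier[OF diag_hom fc] .
  have "quot_diff (tprod R X Y) (tdiff R X dX Y dY) (tsum_carrier R X Y) n x
      = dsum (tT (n - 1)) #>\<^bsub>tP (n - 1)\<^esub> tD n (SOME y. y \<in> dsum (tT n) #>\<^bsub>tP n\<^esub> f)"
    by (simp add: quot_diff_def tprod_eq_P tsum_carrier_eq_dsum diag)
  also have "\<dots> = dsum (tT (n - 1)) #>\<^bsub>tP (n - 1)\<^esub> tD n f"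
    by (rule FactGroup_induced_rcos[OF normal_dsum_P normal_dsum_P D_hom_P D_dsum fc])
  finally have l1: "lim1_map (n - 1) (quot_diff (tprod R X Y) (tdiff R X dX Y dY) (tsum_carrier R X Y) n x)
      = Bd (n - 1) #>\<^bsub>tSP (n - 1)\<^esub> diag (n - 1) (tD n f)"
    by (simp add: lim1_map_rcos[OF Df])
  have "lim1_diff (tsys R X Y k) (tsys_nu R X Y k) (tsys_diff R X dX Y dY k) n (lim1_map n x)
      = Bd (n - 1) #>\<^bsub>tSP (n - 1)\<^esub> DS n (SOME y. y \<in> Bd n #>\<^bsub>tSP n\<^esub> diag n f)"
    by (simp add: lim1_diff_def quot_diff_def sys_prod_tsys_eq Bd_def diag lim1_map_rcos[OF fc])
  also have "\<dots> = Bd (n - 1) #>\<^bsub>tSP (n - 1)\<^esub> DS n (diag n f)"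
    by (rule FactGroup_induced_rcos[OF normal_Bd normal_Bd DS_hom DS_Bd x1])
  also have "\<dots> = Bd (n - 1) #>\<^bsub>tSP (n - 1)\<^esub> diag (n - 1) (tD n f)"
    by (rule rcos_eqI[OF group_SP subgroup_Bd hom_in_carrier[OF DS_hom x1] hom_in_carrier[OF diag_hom Df] diag_chain_mod_Bd[OF fc]])
  finally show ?thesis using l1 by simp
qed

theorem stable_tensor_iso_lim1: "cx_iso (quot_grp (tprod R X Y) (tsum_carrier R X Y))
           (quot_diff (tprod R X Y) (tdiff R X dX Y dY) (tsum_carrier R X Y))
           (lim1_grp (tsys R X Y k) (tsys_nu R X Y k))
           (lim1_diff (tsys R X Y k) (tsys_nu R X Y k) (tsys_diff R X dX Y dY k))"
proof -
  have g1: "quot_grp (tprod R X Y) (tsum_carrier R X Y) n = tP n Mod dsum (tT n)" for n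
    by (simp add: quot_grp_def tprod_eq_P tsum_carrier_eq_dsum)
  have g2: "lim1_grp (tsys R X Y k) (tsys_nu R X Y k) n = tSP n Mod Bd n" for n
    by (simp add: lim1_grp_def quot_grp_def sys_prod_tsys_eq Bd_def)
  show ?thesis unfolding cx_iso_def g1 g2
    by (rule exI[of _ lim1_map]) (use lim1_map_iso lim1_map_chain in simp)
qed

end

theorem theorem3p5:
  fixes R :: "'r ring"
    and X :: "int \<Rightarrow> ('r, 'a) module" and dX :: "int \<Rightarrow> 'a \<Rightarrow> 'a"
    and Y :: "int \<Rightarrow> ('r, 'b) module" and dY :: "int \<Rightarrow> 'b \<Rightarrow> 'b"
    and k :: int
  assumes "ring R"
    and "is_complex (opp_ring R) X dX"
    and "is_complex R Y dY"
    and "bdd_above_with_sup Y k"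
  shows "cx_iso (tprod R X Y) (tdiff R X dX Y dY)
           (lim_grp (qsys R X Y k) (qsys_nu R X Y k))
           (sys_prod_diff (qsys_diff R X dX Y dY k))
       \<and> cx_iso (quot_grp (tprod R X Y) (tsum_carrier R X Y))
           (quot_diff (tprod R X Y) (tdiff R X dX Y dY) (tsum_carrier R X Y))
           (lim1_grp (tsys R X Y k) (tsys_nu R X Y k))
           (lim1_diff (tsys R X Y k) (tsys_nu R X Y k) (tsys_diff R X dX Y dY k))"
proof -
  interpret tensor_bdd_above R X dX Y dY k
    by unfold_locales (use assms in \<open>auto intro: tensor_complexesI vanishes_above_sup\<close>)
  show ?thesis using tprod_iso_lim stable_tensor_iso_lim1 by blast
qed

end
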